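(* Let $\rho$ be a bipartite density matrix on $\mathbb{C}^n\otimes\mathbb{C}^m$ such that its partial transpose $\rho^{PT}$ is not positive semidefinite. Then $\rho$ can be converted by local quantum operations and classical communication (LQ+CC) into a density matrix $\rho_{bc}$ on $\mathbb{C}^d\otimes\mathbb{C}^d$, for some $d\le\min(n,m)$ and some real parameters $b,c$, such that $\rho_{bc}^{PT}$ is not positive semidefinite, where $$\rho_{bc}=a\sum_{i=0}^{d-1}|ii\rangle\langle ii|+b\sum_{0\le i<j\le d-1}|\psi^-_{ij}\rangle\langle\psi^-_{ij}|+c\sum_{0\le i<j\le d-1}|\psi^+_{ij}\rangle\langle\psi^+_{ij}|,\qquad da+(b+c)\frac{d(d-1)}{2}=1.$$
   Context: $\{|i\rangle\}$ is an orthonormal basis of $\mathbb{C}^d$ and $|\psi^{\pm}_{ij}\rangle=\frac{1}{\sqrt2}(|ij\rangle\pm|ji\rangle)$. The partial transpose (applied to the second factor, Bob's) is defined by $\langle ij|\rho^{PT}|kl\rangle=\langle il|\rho|kj\rangle$; whether $\rho^{PT}\ge0$ does not depend on the basis used. LQ+CC operations are arbitrary sequences of local quantum operations by each party (appending ancillas, local unitaries, local measurements/filters with postselection on outcomes, discarding subsystems, local projections) together with classical communication between the parties. *)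

theory Defs
  imports Complex_Main "Jordan_Normal_Form.Matrix"
begin

(* Bipartite operators on C^n (x) C^m are (n*m) x (n*m) complex matrices;
   the product basis vector |i j> (i < n, j < m) has index i*m + j. *)

definition adj :: "complex mat \<Rightarrow> complex mat" where
  "adj A = mat (dim_col A) (dim_row A) (\<lambda>(i,j). cnj (A $$ (j,i)))"

definition mtrace :: "complex mat \<Rightarrow> complex" where
  "mtrace A = (\<Sum>i<dim_row A. A $$ (i,i))"

definition psd :: "complex mat \<Rightarrow> bool" where
  "psd A \<longleftrightarrow> dim_col A = dim_row A \<and> adj A = A \<and>
     (\<forall>v \<in> carrier_vec (dim_row A).
        0 \<le> Re (\<Sum>i<dim_row A. \<Sum>j<dim_row A. cnj (v $ i) * A $$ (i,j) * v $ j))"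

definition density_mat :: "nat \<Rightarrow> complex mat \<Rightarrow> bool" where
  "density_mat N \<rho> \<longleftrightarrow> \<rho> \<in> carrier_mat N N \<and> psd \<rho> \<and> mtrace \<rho> = 1"

definition kron :: "complex mat \<Rightarrow> complex mat \<Rightarrow> complex mat" where
  "kron A B = mat (dim_row A * dim_row B) (dim_col A * dim_col B)
     (\<lambda>(r,s). A $$ (r div dim_row B, s div dim_col B) * B $$ (r mod dim_row B, s mod dim_col B))"

(* partial transpose on the second factor of C^n (x) C^m:
   <ij| rho^PT |kl> = <il| rho |kj> *)
definition ptrans :: "nat \<Rightarrow> nat \<Rightarrow> complex mat \<Rightarrow> complex mat" where
  "ptrans n m \<rho> = mat (n*m) (n*m)
     (\<lambda>(r,s). \<rho> $$ ((r div m) * m + s mod m, (s div m) * m + r mod m))"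

definition msum :: "nat \<Rightarrow> complex mat list \<Rightarrow> complex mat" where
  "msum N xs = foldr (+) xs (0\<^sub>m N N)"

(* LQ+CC operations, given by a list of product Kraus operators (A_k, B_k)
   (the full record of classical outcomes).  locc a b a' b' K: the operation maps
   C^a (x) C^b to C^a' (x) C^b'.
   - alice/bob: a local (trace non-increasing) instrument on one side, each
     Kraus operator being one recorded outcome (dropping outcomes = postselection;
     ancillas, unitaries, projections, discarding subsystems are special cases);
   - comp: after a LQ+CC operation, the outcome is communicated and, conditioned on
     it, a further LQ+CC operation is applied. *)
inductive locc :: "nat \<Rightarrow> nat \<Rightarrow> nat \<Rightarrow> nat \<Rightarrow> (complex mat \<times> complex mat) list \<Rightarrow> bool" where
  alice: "\<lbrakk>\<forall>A\<in>set As. A \<in> carrier_mat a' a;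
          psd (1\<^sub>m a - msum a (map (\<lambda>A. adj A * A) As))\<rbrakk>
        \<Longrightarrow> locc a b a' b (map (\<lambda>A. (A, 1\<^sub>m b)) As)"
| bob: "\<lbrakk>\<forall>B\<in>set Bs. B \<in> carrier_mat b' b;
          psd (1\<^sub>m b - msum b (map (\<lambda>B. adj B * B) Bs))\<rbrakk>
        \<Longrightarrow> locc a b a b' (map (\<lambda>B. (1\<^sub>m a, B)) Bs)"
| comp: "\<lbrakk>locc a b a1 b1 K; length Ls = length K; \<forall>L\<in>set Ls. locc a1 b1 a2 b2 L\<rbrakk>
        \<Longrightarrow> locc a b a2 b2
              (concat (map2 (\<lambda>(A,B) L. map (\<lambda>(A',B'). (A' * A, B' * B)) L) K Ls))"

definition apply_kraus :: "nat \<Rightarrow> (complex mat \<times> complex mat) list \<Rightarrow> complex mat \<Rightarrow> complex mat" where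
  "apply_kraus N K \<rho> = msum N (map (\<lambda>(A,B). kron A B * \<rho> * adj (kron A B)) K)"

definition locc_convertible ::
  "nat \<Rightarrow> nat \<Rightarrow> nat \<Rightarrow> nat \<Rightarrow> complex mat \<Rightarrow> complex mat \<Rightarrow> bool" where
  "locc_convertible n m n' m' \<rho> \<sigma> \<longleftrightarrow>
     (\<exists>K. locc n m n' m' K \<and>
        (let \<tau> = apply_kraus (n'*m') K \<rho> in mtrace \<tau> \<noteq> 0 \<and> \<sigma> = (1 / mtrace \<tau>) \<cdot>\<^sub>m \<tau>))"

definition ket2 :: "nat \<Rightarrow> nat \<Rightarrow> nat \<Rightarrow> complex vec" where
  "ket2 d i j = unit_vec (d*d) (i*d + j)"

(* |psi^{+-}_{ij}> = (|ij> +- |ji>)/sqrt 2, s = +1 or -1 *)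
definition psi :: "complex \<Rightarrow> nat \<Rightarrow> nat \<Rightarrow> nat \<Rightarrow> complex vec" where
  "psi s d i j = complex_of_real (1 / sqrt 2) \<cdot>\<^sub>v (ket2 d i j + s \<cdot>\<^sub>v ket2 d j i)"

definition proj :: "complex vec \<Rightarrow> complex mat" where
  "proj v = mat (dim_vec v) (dim_vec v) (\<lambda>(r,s). v $ r * cnj (v $ s))"

definition rho_bc :: "nat \<Rightarrow> real \<Rightarrow> real \<Rightarrow> real \<Rightarrow> complex mat" where
  "rho_bc d a b c = mat (d*d) (d*d) (\<lambda>rs.
      complex_of_real a * (\<Sum>i<d. proj (ket2 d i i) $$ rs)
    + complex_of_real b * (\<Sum>(i,j)\<in>{(i,j). i < j \<and> j < d}. proj (psi (-1) d i j) $$ rs)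
    + complex_of_real c * (\<Sum>(i,j)\<in>{(i,j). i < j \<and> j < d}. proj (psi 1 d i j) $$ rs))"

end

(*
  If the partial transpose of rho is not positive, some vector v has <v|rho^PT|v> < 0.
  Local filters F_A, F_B onto C^d, d = min n m, with F_A^T conj(F_B) proportional to the
  conjugate of the coefficient matrix of v, turn this into <Phi|tau^PT|Phi> < 0 for the
  filtered state tau and Phi = sum_k |kk>.  Alice then applies a random monomial unitary U
  (a permutation matrix whose entries are cube roots of unity), announces it, and Bob applies
  the same U.  This U (x) U twirl keeps <Phi|.^PT|Phi>, since the phases cancel on |kl><lk|,
  while invariance under the phases and permutations kills every entry except <ii|.|ii>,
  <ij|.|ij> and <ij|.|ji> and makes these independent of i and j.  The normalised twirled
  state is therefore some rho_bc, and its partial transpose is still not positive.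
*)

theory Submission
  imports Defs "HOL-Combinatorics.Permutations" "HOL-Analysis.Convex"
begin

lemma pair_index_less:
  fixes i j n m :: nat
  assumes "i < n" "j < m"
  shows "i * m + j < n * m"
proof -
  have "i * m + j < (i + 1) * m" using assms by simp
  also have "\<dots> \<le> n * m" using assms by (intro mult_right_mono) auto
  finally show ?thesis .
qed

lemma pair_index_eq_iff:
  fixes i j i' j' m :: nat
  assumes "j < m" "j' < m"
  shows "i * m + j = i' * m + j' \<longleftrightarrow> i = i' \<and> j = j'"
  by (metis assms add.commute div_mult_self1 div_less add_0 mod_mult_self1 mod_less
        not_less_zero)

lemma lessThan_mult_pair_index:
  fixes r n m :: nat
  assumes "r < n * m"
  obtains i j where "i < n" "j < m" "r = i * m + j"
proof
  have "m > 0" using assms by (auto intro!: Nat.gr0I)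
  then show "r div m < n" "r mod m < m" using assms by (simp_all add: less_mult_imp_div_less)
qed simp

lemma sum_lessThan_pair_index:
  fixes f :: "nat \<Rightarrow> 'a::comm_monoid_add"
  shows "(\<Sum>r<n * m. f r) = (\<Sum>i<n. \<Sum>j<m. f (i * m + j))"
proof -
  have "bij_betw (\<lambda>(i, j). i * m + j) ({..<n} \<times> {..<m}) {..<n * m}"
    by (rule bij_betwI[where g = "\<lambda>r. (r div m, r mod m)"])
       (auto simp: pair_index_less less_mult_imp_div_less,
        metis mod_less_divisor mult_zero_right not_less_zero neq0_conv)
  then have "(\<Sum>r<n * m. f r) = (\<Sum>(i, j)\<in>{..<n} \<times> {..<m}. f (i * m + j))"
    by (simp add: sum.reindex_bij_betw[symmetric] case_prod_unfold)
  then show ?thesis by (simp add: sum.cartesian_product)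
qed

lemma sum_sum_delta:
  fixes f :: "nat \<Rightarrow> nat \<Rightarrow> 'a::comm_monoid_add"
  assumes "a < N" "b < M"
  shows "(\<Sum>r<N. \<Sum>t<M. if r = a then if t = b then f r t else 0 else 0) = f a b"
  using assms by (subst sum.swap) simp

lemma sum_swap_nested:
  "(\<Sum>i\<in>I. \<Sum>j\<in>J. \<Sum>x\<in>X. \<Sum>y\<in>Y. F i j x y) = (\<Sum>x\<in>X. \<Sum>y\<in>Y. \<Sum>i\<in>I. \<Sum>j\<in>J. F i j x y)"
proof -
  have "(\<Sum>i\<in>I. \<Sum>j\<in>J. \<Sum>x\<in>X. \<Sum>y\<in>Y. F i j x y) = (\<Sum>i\<in>I. \<Sum>x\<in>X. \<Sum>y\<in>Y. \<Sum>j\<in>J. F i j x y)"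
    by (subst sum.swap) (simp add: sum.swap[of _ J])
  also have "\<dots> = (\<Sum>x\<in>X. \<Sum>y\<in>Y. \<Sum>i\<in>I. \<Sum>j\<in>J. F i j x y)"
    by (subst sum.swap) (simp add: sum.swap[of _ I])
  finally show ?thesis .
qed

lemma sum_diag_offdiag:
  fixes x y :: "'a::comm_ring_1"
  shows "(\<Sum>k<d. \<Sum>l<d. if k = l then x else y) = of_nat d * x + of_nat d * (of_nat d - 1) * y"
proof -
  have "(\<Sum>l<d. if k = l then x else y) = x + (of_nat d - 1) * y" if "k < d" for k
  proof -
    have "(\<Sum>l<d. if k = l then x else y) = (\<Sum>l<d. y + (if k = l then x - y else 0))"
      by (intro sum.cong) auto
    then show ?thesis using that by (simp add: sum.distrib algebra_simps)
  qed
  then have "(\<Sum>k<d. \<Sum>l<d. if k = l then x else y) = (\<Sum>k<d. x + (of_nat d - 1) * y)"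
    by (intro sum.cong) auto
  then show ?thesis by (simp add: algebra_simps)
qed


lemma adj_carrier_mat [simp]: "A \<in> carrier_mat a b \<Longrightarrow> adj A \<in> carrier_mat b a"
  by (simp add: adj_def)

lemma adj_dim [simp]: "dim_row (adj A) = dim_col A" "dim_col (adj A) = dim_row A"
  by (simp_all add: adj_def)

lemma adj_index [simp]: "i < dim_col A \<Longrightarrow> j < dim_row A \<Longrightarrow> adj A $$ (i, j) = cnj (A $$ (j, i))"
  by (simp add: adj_def)

lemma adj_adj: "adj (adj A) = A"
  by (rule eq_matI) auto

lemma adj_add: "A \<in> carrier_mat a b \<Longrightarrow> B \<in> carrier_mat a b \<Longrightarrow> adj (A + B) = adj A + adj B"
  by (rule eq_matI) auto

lemma adj_minus: "A \<in> carrier_mat a b \<Longrightarrow> B \<in> carrier_mat a b \<Longrightarrow> adj (A - B) = adj A - adj B"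
  by (rule eq_matI) auto

lemma adj_zero: "adj (0\<^sub>m a b) = 0\<^sub>m b a"
  by (rule eq_matI) auto

lemma adj_one: "adj (1\<^sub>m a) = 1\<^sub>m a"
  by (rule eq_matI) auto

lemma adj_smult_of_real: "adj (complex_of_real r \<cdot>\<^sub>m A) = complex_of_real r \<cdot>\<^sub>m adj A"
  by (rule eq_matI) auto

lemma adj_mult:
  assumes "A \<in> carrier_mat a b" "B \<in> carrier_mat b c"
  shows "adj (A * B) = adj B * adj A"
  by (rule eq_matI) (use assms in \<open>auto simp: scalar_prod_def mult.commute\<close>)

lemma hermitian_index:
  assumes "adj A = A" "i < dim_row A" "j < dim_col A"
  shows "cnj (A $$ (i, j)) = A $$ (j, i)"
  by (metis assms adj_dim adj_index)

lemma index_mult_mult_adj: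
  assumes "A \<in> carrier_mat a b" "X \<in> carrier_mat b b" "B \<in> carrier_mat c b" "i < a" "j < c"
  shows "(A * X * adj B) $$ (i, j) = (\<Sum>x<b. \<Sum>y<b. A $$ (i, x) * X $$ (x, y) * cnj (B $$ (j, y)))"
proof -
  have "(A * X * adj B) $$ (i, j) = (\<Sum>y<b. (\<Sum>x<b. A $$ (i, x) * X $$ (x, y)) * cnj (B $$ (j, y)))"
    using assms by (simp add: scalar_prod_def atLeast0LessThan)
  also have "\<dots> = (\<Sum>y<b. \<Sum>x<b. A $$ (i, x) * X $$ (x, y) * cnj (B $$ (j, y)))"
    by (simp add: sum_distrib_right)
  also have "\<dots> = (\<Sum>x<b. \<Sum>y<b. A $$ (i, x) * X $$ (x, y) * cnj (B $$ (j, y)))"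
    by (rule sum.swap)
  finally show ?thesis .
qed

lemma conj_mult_mult_adj:
  assumes A: "A \<in> carrier_mat a b" and X: "X \<in> carrier_mat b b" and "adj X = X"
  shows "adj (A * X * adj A) = A * X * adj A"
proof -
  have "adj (A * X * adj A) = A * adj (A * X)"
    using adj_mult[OF mult_carrier_mat[OF A X] adj_carrier_mat[OF A]] by (simp add: adj_adj)
  also have "\<dots> = A * (X * adj A)"
    using adj_mult[OF A X] assms(3) by simp
  finally show ?thesis using A X by (simp add: assoc_mult_mat[of _ a b _ b _ a])
qed

definition qform :: "complex mat \<Rightarrow> complex vec \<Rightarrow> complex" where
  "qform A v = (\<Sum>i<dim_row A. \<Sum>j<dim_row A. cnj (v $ i) * A $$ (i, j) * v $ j)"

lemma psd_iff_qform:
  "psd A \<longleftrightarrow> dim_col A = dim_row A \<and> adj A = A \<and> (\<forall>v \<in> carrier_vec (dim_row A). 0 \<le> Re (qform A v))"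
  unfolding psd_def qform_def ..

lemma psd_carrier_mat: "psd A \<Longrightarrow> A \<in> carrier_mat (dim_row A) (dim_row A)"
  unfolding psd_def carrier_mat_def by simp

lemma qform_mult_mult_adj:
  assumes A: "A \<in> carrier_mat a b" and X: "X \<in> carrier_mat b b" and v: "v \<in> carrier_vec a"
  shows "qform (A * X * adj A) v = qform X (vec b (\<lambda>x. \<Sum>i<a. cnj (A $$ (i, x)) * v $ i))"
proof -
  have "qform (A * X * adj A) v = (\<Sum>i<a. \<Sum>j<a. cnj (v $ i) * (A * X * adj A) $$ (i, j) * v $ j)"
    unfolding qform_def using A by simp
  also have "\<dots> =
      (\<Sum>i<a. \<Sum>j<a. \<Sum>x<b. \<Sum>y<b. cnj (v $ i) * A $$ (i, x) * X $$ (x, y) * cnj (A $$ (j, y)) * v $ j)"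
    by (intro sum.cong refl)
       (simp add: index_mult_mult_adj[OF A X A] sum_distrib_left sum_distrib_right mult.assoc)
  also have "\<dots> = (\<Sum>x<b. \<Sum>y<b. \<Sum>i<a. \<Sum>j<a. cnj (v $ i) * A $$ (i, x) * X $$ (x, y) * cnj (A $$ (j, y)) * v $ j)"
    by (rule sum_swap_nested)
  also have "\<dots> = (\<Sum>x<b. \<Sum>y<b. cnj (\<Sum>i<a. cnj (A $$ (i, x)) * v $ i) * X $$ (x, y) * (\<Sum>j<a. cnj (A $$ (j, y)) * v $ j))"
    by (intro sum.cong refl) (simp add: sum_distrib_left sum_distrib_right mult_ac)
  also have "\<dots> = qform X (vec b (\<lambda>x. \<Sum>i<a. cnj (A $$ (i, x)) * v $ i))"
    unfolding qform_def using X by simp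
  finally show ?thesis .
qed

lemma psd_mult_mult_adj:
  assumes "psd X" "X \<in> carrier_mat b b" "A \<in> carrier_mat a b"
  shows "psd (A * X * adj A)"
  unfolding psd_iff_qform
proof (intro conjI ballI)
  show "dim_col (A * X * adj A) = dim_row (A * X * adj A)" using assms by simp
  show "adj (A * X * adj A) = A * X * adj A"
    using conj_mult_mult_adj assms unfolding psd_def by blast
  fix v :: "complex vec" assume "v \<in> carrier_vec (dim_row (A * X * adj A))"
  then show "0 \<le> Re (qform (A * X * adj A) v)"
    using assms qform_mult_mult_adj[OF assms(3,2)] unfolding psd_iff_qform by auto
qed

lemma msum_Cons: "msum N (A # As) = A + msum N As"
  by (simp add: msum_def)

lemma msum_carrier_mat: "\<forall>A\<in>set As. A \<in> carrier_mat N N \<Longrightarrow> msum N As \<in> carrier_mat N N"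
  unfolding msum_def by (induction As) auto

lemma msum_index:
  assumes "\<forall>A\<in>set As. A \<in> carrier_mat N N" "i < N" "j < N"
  shows "msum N As $$ (i, j) = (\<Sum>A\<leftarrow>As. A $$ (i, j))"
  using assms(1)
proof (induction As)
  case Nil
  then show ?case using assms(2,3) by (simp add: msum_def)
next
  case (Cons A As)
  then show ?case using msum_carrier_mat[of As N] assms(2,3) by (simp add: msum_Cons)
qed

lemma qform_add:
  assumes "A \<in> carrier_mat N N" "B \<in> carrier_mat N N"
  shows "qform (A + B) v = qform A v + qform B v"
  using assms unfolding qform_def by (simp add: algebra_simps sum.distrib)

lemma qform_minus:
  assumes "A \<in> carrier_mat N N" "B \<in> carrier_mat N N"
  shows "qform (A - B) v = qform A v - qform B v"
  using assms unfolding qform_def by (simp add: algebra_simps sum_subtractf)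

lemma adj_msum:
  "\<forall>A\<in>set As. A \<in> carrier_mat N N \<and> adj A = A \<Longrightarrow> adj (msum N As) = msum N As"
proof (induction As)
  case Nil
  then show ?case by (simp add: msum_def adj_zero)
next
  case (Cons A As)
  then show ?case using msum_carrier_mat[of As N] adj_add[of A N N "msum N As"] by (auto simp: msum_Cons)
qed

lemma psd_add:
  assumes "psd A" "psd B" "A \<in> carrier_mat N N" "B \<in> carrier_mat N N"
  shows "psd (A + B)"
  unfolding psd_iff_qform
proof (intro conjI ballI)
  show "dim_col (A + B) = dim_row (A + B)" "adj (A + B) = A + B"
    using assms adj_add[of A N N B] unfolding psd_def by simp_all
  fix v :: "complex vec" assume "v \<in> carrier_vec (dim_row (A + B))"
  then have "0 \<le> Re (qform A v)" "0 \<le> Re (qform B v)"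
    using assms unfolding psd_iff_qform by auto
  then show "0 \<le> Re (qform (A + B) v)" using qform_add[OF assms(3,4)] by simp
qed

lemma psd_msum: "\<forall>A\<in>set As. A \<in> carrier_mat N N \<and> psd A \<Longrightarrow> psd (msum N As)"
proof (induction As)
  case Nil
  then show ?case by (simp add: msum_def psd_iff_qform adj_zero qform_def)
next
  case (Cons A As)
  then show ?case using psd_add[of A "msum N As" N] msum_carrier_mat[of As N] by (auto simp: msum_Cons)
qed

lemma qform_smult:
  assumes "A \<in> carrier_mat N N"
  shows "qform (c \<cdot>\<^sub>m A) v = c * qform A v"
  unfolding qform_def using assms by (auto simp: sum_distrib_left mult_ac intro!: sum.cong)

lemma psd_smult_of_real:
  assumes "psd A" "r \<ge> 0"
  shows "psd (complex_of_real r \<cdot>\<^sub>m A)"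
  unfolding psd_iff_qform
proof (intro conjI ballI)
  show "dim_col (complex_of_real r \<cdot>\<^sub>m A) = dim_row (complex_of_real r \<cdot>\<^sub>m A)"
    using assms unfolding psd_def by simp
  show "adj (complex_of_real r \<cdot>\<^sub>m A) = complex_of_real r \<cdot>\<^sub>m A"
    using assms adj_smult_of_real unfolding psd_def by simp
  fix v :: "complex vec" assume "v \<in> carrier_vec (dim_row (complex_of_real r \<cdot>\<^sub>m A))"
  then have "0 \<le> Re (qform A v)" using assms(1) unfolding psd_iff_qform by auto
  then show "0 \<le> Re (qform (complex_of_real r \<cdot>\<^sub>m A) v)"
    using assms(2) psd_carrier_mat[OF assms(1)] by (simp add: qform_smult)
qed

lemma qform_one: "qform (1\<^sub>m N) v = complex_of_real (\<Sum>i<N. (cmod (v $ i))\<^sup>2)"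
proof -
  have "qform (1\<^sub>m N) v = (\<Sum>i<N. \<Sum>j<N. if i = j then cnj (v $ i) * v $ j else 0)"
    unfolding qform_def by (intro sum.cong) auto
  also have "\<dots> = (\<Sum>i<N. cnj (v $ i) * v $ i)"
    by simp
  also have "\<dots> = (\<Sum>i<N. complex_of_real ((cmod (v $ i))\<^sup>2))"
    by (intro sum.cong refl) (subst complex_norm_square, simp add: mult.commute)
  finally show ?thesis by simp
qed

lemma qform_adj_mult:
  assumes F: "F \<in> carrier_mat c b" and v: "v \<in> carrier_vec b"
  shows "qform (adj F * F) v = complex_of_real (\<Sum>k<c. (cmod (\<Sum>i<b. F $$ (k, i) * v $ i))\<^sup>2)"
proof -
  have "adj F * F = adj F * 1\<^sub>m c * adj (adj F)"
    using F by (simp add: adj_adj)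
  then have "qform (adj F * F) v = qform (1\<^sub>m c) (vec c (\<lambda>k. \<Sum>i<b. cnj (adj F $$ (i, k)) * v $ i))"
    using qform_mult_mult_adj[OF adj_carrier_mat[OF F] one_carrier_mat v] by simp
  also have "\<dots> = qform (1\<^sub>m c) (vec c (\<lambda>k. \<Sum>i<b. F $$ (k, i) * v $ i))"
    using F by (intro arg_cong[where f = "qform (1\<^sub>m c)"]) (auto intro!: sum.cong)
  finally show ?thesis by (simp add: qform_one)
qed

lemma qform_unit_vec:
  assumes "A \<in> carrier_mat N N" "i < N"
  shows "qform A (unit_vec N i) = A $$ (i, i)"
proof -
  have "qform A (unit_vec N i) = (\<Sum>r<N. \<Sum>t<N. if r = i then if t = i then A $$ (r, t) else 0 else 0)"
    using assms unfolding qform_def by (intro sum.cong) auto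
  then show ?thesis using assms(2) by (simp only: sum_sum_delta)
qed

lemma qform_unit_vec_add:
  assumes "A \<in> carrier_mat N N" "i < N" "j < N" "i \<noteq> j"
  shows "qform A (unit_vec N i + unit_vec N j) = A $$ (i, i) + A $$ (i, j) + A $$ (j, i) + A $$ (j, j)"
proof -
  let ?e = "\<lambda>a b r t. if r = a then if t = b then A $$ (r, t) else 0 else 0"
  have "qform A (unit_vec N i + unit_vec N j) = (\<Sum>r<N. \<Sum>t<N. ?e i i r t + ?e i j r t + ?e j i r t + ?e j j r t)"
    using assms unfolding qform_def by (intro sum.cong) auto
  also have "\<dots> = (\<Sum>r<N. \<Sum>t<N. ?e i i r t) + (\<Sum>r<N. \<Sum>t<N. ?e i j r t)
      + (\<Sum>r<N. \<Sum>t<N. ?e j i r t) + (\<Sum>r<N. \<Sum>t<N. ?e j j r t)"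
    by (simp only: sum.distrib)
  finally show ?thesis using assms by (simp only: sum_sum_delta)
qed

lemma mtrace_smult: "A \<in> carrier_mat N N \<Longrightarrow> mtrace (c \<cdot>\<^sub>m A) = c * mtrace A"
  unfolding mtrace_def by (simp add: sum_distrib_left)


definition frobenius_sq :: "complex mat \<Rightarrow> real" where
  "frobenius_sq F = (\<Sum>k<dim_row F. \<Sum>i<dim_col F. (cmod (F $$ (k, i)))\<^sup>2)"

lemma cmod_sum_mult_sq_le:
  fixes f g :: "'i \<Rightarrow> complex"
  shows "(cmod (\<Sum>i\<in>I. f i * g i))\<^sup>2 \<le> (\<Sum>i\<in>I. (cmod (f i))\<^sup>2) * (\<Sum>i\<in>I. (cmod (g i))\<^sup>2)"
proof -
  have "cmod (\<Sum>i\<in>I. f i * g i) \<le> (\<Sum>i\<in>I. cmod (f i) * cmod (g i))"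
    by (rule order_trans[OF norm_sum]) (simp add: norm_mult)
  then have "(cmod (\<Sum>i\<in>I. f i * g i))\<^sup>2 \<le> (\<Sum>i\<in>I. cmod (f i) * cmod (g i))\<^sup>2"
    by (simp add: power_mono)
  also have "\<dots> \<le> (\<Sum>i\<in>I. (cmod (f i))\<^sup>2) * (\<Sum>i\<in>I. (cmod (g i))\<^sup>2)"
    by (rule Cauchy_Schwarz_ineq_sum)
  finally show ?thesis .
qed

lemma norm_mult_vec_sq_le_frobenius_sq:
  "(\<Sum>k<dim_row F. (cmod (\<Sum>i<dim_col F. F $$ (k, i) * v $ i))\<^sup>2)
     \<le> frobenius_sq F * (\<Sum>i<dim_col F. (cmod (v $ i))\<^sup>2)"
proof -
  have "(\<Sum>k<dim_row F. (cmod (\<Sum>i<dim_col F. F $$ (k, i) * v $ i))\<^sup>2)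
      \<le> (\<Sum>k<dim_row F. (\<Sum>i<dim_col F. (cmod (F $$ (k, i)))\<^sup>2) * (\<Sum>i<dim_col F. (cmod (v $ i))\<^sup>2))"
    by (intro sum_mono cmod_sum_mult_sq_le)
  then show ?thesis unfolding frobenius_sq_def by (simp add: sum_distrib_right)
qed

lemma hermitian_adj_mult_self:
  assumes "F \<in> carrier_mat c b"
  shows "adj F * F \<in> carrier_mat b b" "adj (adj F * F) = adj F * F"
  using mult_carrier_mat[OF adj_carrier_mat[OF assms] assms] adj_mult[OF adj_carrier_mat[OF assms] assms]
  by (simp_all add: adj_adj)

lemma qform_msum_adj_mult:
  assumes Fs: "\<forall>F\<in>set Fs. F \<in> carrier_mat c b" and v: "v \<in> carrier_vec b"
  shows "qform (msum b (map (\<lambda>F. adj F * F) Fs)) v =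
    complex_of_real (\<Sum>F\<leftarrow>Fs. \<Sum>k<c. (cmod (\<Sum>i<b. F $$ (k, i) * v $ i))\<^sup>2)"
  using Fs
proof (induction Fs)
  case Nil
  then show ?case by (simp add: msum_def qform_def)
next
  case (Cons F Fs)
  then have F: "F \<in> carrier_mat c b" and M: "msum b (map (\<lambda>F. adj F * F) Fs) \<in> carrier_mat b b"
    using hermitian_adj_mult_self(1)[of _ c b] by (auto intro!: msum_carrier_mat)
  have "qform (msum b (map (\<lambda>F. adj F * F) (F # Fs))) v = qform (adj F * F) v + qform (msum b (map (\<lambda>F. adj F * F) Fs)) v"
    by (simp add: msum_Cons qform_add[OF hermitian_adj_mult_self(1)[OF F] M])
  then show ?case using Cons qform_adj_mult[OF F v] by simp
qed

text \<open>Uses \<open>F\<^sup>\<dagger> F \<le> \<parallel>F\<parallel>\<^sub>2\<^sup>2 \<cdot> 1\<close> (Cauchy-Schwarz).\<close>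

lemma psd_one_minus_msum_adj_mult:
  assumes Fs: "\<forall>F\<in>set Fs. F \<in> carrier_mat c b" and bound: "(\<Sum>F\<leftarrow>Fs. frobenius_sq F) \<le> 1"
  shows "psd (1\<^sub>m b - msum b (map (\<lambda>F. adj F * F) Fs))"
proof -
  let ?G = "map (\<lambda>F. adj F * F) Fs"
  have G: "\<forall>G\<in>set ?G. G \<in> carrier_mat b b \<and> adj G = G"
    using Fs hermitian_adj_mult_self by auto
  then have M: "msum b ?G \<in> carrier_mat b b" by (intro msum_carrier_mat) auto
  show ?thesis unfolding psd_iff_qform
  proof (intro conjI ballI)
    show "dim_col (1\<^sub>m b - msum b ?G) = dim_row (1\<^sub>m b - msum b ?G)" using M by simp
    show "adj (1\<^sub>m b - msum b ?G) = 1\<^sub>m b - msum b ?G"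
      using adj_minus[OF one_carrier_mat M] adj_one adj_msum[OF G] by simp
    fix v :: "complex vec" assume "v \<in> carrier_vec (dim_row (1\<^sub>m b - msum b ?G))"
    then have v: "v \<in> carrier_vec b" using M by simp
    define nv where "nv = (\<Sum>i<b. (cmod (v $ i))\<^sup>2)"
    define nF where "nF = (\<lambda>F. \<Sum>k<c. (cmod (\<Sum>i<b. F $$ (k, i) * v $ i))\<^sup>2)"
    have "sum_list (map nF Fs) \<le> sum_list (map (\<lambda>F. frobenius_sq F * nv) Fs)"
    proof (rule sum_list_mono)
      fix F assume "F \<in> set Fs"
      then show "nF F \<le> frobenius_sq F * nv"
        using Fs norm_mult_vec_sq_le_frobenius_sq[of F v] unfolding nF_def nv_def by auto
    qed
    also have "\<dots> = sum_list (map frobenius_sq Fs) * nv"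
      by (simp add: sum_list_mult_const)
    also have "\<dots> \<le> nv"
      using mult_right_mono[OF bound, of nv] unfolding nv_def by (simp add: sum_nonneg)
    finally have le: "sum_list (map nF Fs) \<le> nv" .
    have "qform (1\<^sub>m b - msum b ?G) v = complex_of_real (nv - sum_list (map nF Fs))"
      using qform_minus[OF one_carrier_mat M] qform_msum_adj_mult[OF Fs v]
      unfolding qform_one nv_def nF_def by simp
    then show "0 \<le> Re (qform (1\<^sub>m b - msum b ?G) v)" using le by simp
  qed
qed

lemma kron_carrier_mat [simp]:
  "kron A B \<in> carrier_mat (dim_row A * dim_row B) (dim_col A * dim_col B)"
  by (simp add: kron_def)

lemma kron_dim [simp]:
  "dim_row (kron A B) = dim_row A * dim_row B" "dim_col (kron A B) = dim_col A * dim_col B"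
  by (simp_all add: kron_def)

lemma kron_index:
  assumes "A \<in> carrier_mat n1 m1" "B \<in> carrier_mat n2 m2" "i < n1" "j < n2" "k < m1" "l < m2"
  shows "kron A B $$ (i * n2 + j, k * m2 + l) = A $$ (i, k) * B $$ (j, l)"
  using assms by (simp add: kron_def pair_index_less)

lemma kron_mult:
  assumes A: "A \<in> carrier_mat a1 b1" and B: "B \<in> carrier_mat a2 b2"
    and C: "C \<in> carrier_mat b1 c1" and D: "D \<in> carrier_mat b2 c2"
  shows "kron (A * C) (B * D) = kron A B * kron C D"
proof (rule eq_matI)
  show "dim_row (kron (A * C) (B * D)) = dim_row (kron A B * kron C D)"
    "dim_col (kron (A * C) (B * D)) = dim_col (kron A B * kron C D)"
    using A B C D by simp_all
  fix r s assume "r < dim_row (kron A B * kron C D)" "s < dim_col (kron A B * kron C D)"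
  then have rs: "r < a1 * a2" "s < c1 * c2" using A B C D by auto
  obtain i j k l where ij: "i < a1" "j < a2" "k < c1" "l < c2" "r = i * a2 + j" "s = k * c2 + l"
    using lessThan_mult_pair_index[OF rs(1)] lessThan_mult_pair_index[OF rs(2)] by metis
  have "kron (A * C) (B * D) $$ (r, s) = (A * C) $$ (i, k) * (B * D) $$ (j, l)"
    unfolding ij(5,6) using A B C D ij by (intro kron_index) auto
  also have "\<dots> = (\<Sum>x<b1. A $$ (i, x) * C $$ (x, k)) * (\<Sum>y<b2. B $$ (j, y) * D $$ (y, l))"
    using A B C D ij by (simp add: scalar_prod_def atLeast0LessThan)
  also have "\<dots> = (\<Sum>x<b1. \<Sum>y<b2. (A $$ (i, x) * B $$ (j, y)) * (C $$ (x, k) * D $$ (y, l)))"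
    unfolding sum_product by (intro sum.cong refl) (simp add: mult_ac)
  also have "\<dots> = (\<Sum>x<b1. \<Sum>y<b2. kron A B $$ (i * a2 + j, x * b2 + y) * kron C D $$ (x * b2 + y, k * c2 + l))"
    using A B C D ij by (intro sum.cong refl) (simp add: kron_index)
  also have "\<dots> = (\<Sum>z<b1 * b2. kron A B $$ (i * a2 + j, z) * kron C D $$ (z, k * c2 + l))"
    by (rule sum_lessThan_pair_index[symmetric])
  also have "\<dots> = (kron A B * kron C D) $$ (r, s)"
    using A B C D ij rs by (simp add: scalar_prod_def atLeast0LessThan)
  finally show "kron (A * C) (B * D) $$ (r, s) = (kron A B * kron C D) $$ (r, s)" .
qed

lemma mult_mult_adj_assoc:
  assumes U: "U \<in> carrier_mat a b" and K: "K \<in> carrier_mat b c" and R: "R \<in> carrier_mat c c"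
  shows "(U * K) * R * adj (U * K) = U * (K * R * adj K) * adj U"
proof -
  have aK: "adj K \<in> carrier_mat c b" and aU: "adj U \<in> carrier_mat b a" using U K by auto
  have "(U * K) * R * adj (U * K) = U * (K * R) * (adj K * adj U)"
    using adj_mult[OF U K] assoc_mult_mat[OF U K R] by simp
  also have "\<dots> = U * ((K * R) * (adj K * adj U))"
    using assoc_mult_mat[OF U mult_carrier_mat[OF K R] mult_carrier_mat[OF aK aU]] .
  also have "(K * R) * (adj K * adj U) = (K * R * adj K) * adj U"
    using assoc_mult_mat[OF mult_carrier_mat[OF K R] aK aU] by simp
  also have "U * ((K * R * adj K) * adj U) = U * (K * R * adj K) * adj U"
    using assoc_mult_mat[OF U mult_carrier_mat[OF mult_carrier_mat[OF K R] aK] aU] by simp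
  finally show ?thesis .
qed


section \<open>The twirl over monomial unitaries\<close>

definition omega :: complex where
  "omega = Complex (-1/2) (sqrt 3 / 2)"

lemma omega_sq: "omega ^ 2 = Complex (-1/2) (- sqrt 3 / 2)"
  by (simp add: omega_def power2_eq_square complex_eq_iff field_simps)

lemma omega_cube: "omega ^ 3 = 1"
proof -
  have "omega ^ 3 = omega ^ 2 * omega" by (simp add: power3_eq_cube power2_eq_square)
  then show ?thesis unfolding omega_sq by (simp add: omega_def complex_eq_iff field_simps)
qed

lemma omega_power_mod: "omega ^ n = omega ^ (n mod 3)"
proof -
  have "omega ^ n = omega ^ (3 * (n div 3)) * omega ^ (n mod 3)"
    by (simp flip: power_add)
  then show ?thesis by (simp add: power_mult omega_cube)
qed

lemma omega_power_eq_1_iff: "omega ^ n = 1 \<longleftrightarrow> n mod 3 = 0"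
proof -
  have "omega \<noteq> 1" "omega ^ 2 \<noteq> 1"
    by (simp_all add: omega_sq complex_eq_iff, simp add: omega_def complex_eq_iff)
  moreover have "n mod 3 = 0 \<or> n mod 3 = 1 \<or> n mod 3 = 2" by linarith
  ultimately show ?thesis by (subst omega_power_mod) auto
qed

lemma omega_power_add_mod: "omega ^ ((x + y) mod 3) = omega ^ x * omega ^ y"
  by (metis omega_power_mod power_add)

lemma cnj_omega_power: "cnj (omega ^ n) = omega ^ (2 * n)"
proof -
  have "cnj omega = omega ^ 2"
    unfolding omega_sq by (simp add: omega_def complex_cnj)
  then show ?thesis by (simp add: power_mult)
qed

lemma norm_omega_power [simp]: "cmod (omega ^ n) = 1"
proof -
  have "cmod omega = 1" by (simp add: omega_def cmod_def power2_eq_square field_simps)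
  then show ?thesis by (simp add: norm_power)
qed

lemma cnj_omega_power_mult: "cnj (omega ^ n) * omega ^ n = 1"
proof -
  have "cnj (omega ^ n) * omega ^ n = complex_of_real ((cmod (omega ^ n))\<^sup>2)"
    by (subst complex_norm_square) (simp add: mult.commute)
  then show ?thesis by simp
qed

definition monomial_mat :: "nat \<Rightarrow> (nat \<Rightarrow> nat) \<Rightarrow> (nat \<Rightarrow> nat) \<Rightarrow> complex mat" where
  "monomial_mat d p ph = mat d d (\<lambda>(r, s). if r = p s then omega ^ ph s else 0)"

lemma monomial_mat_carrier_mat [simp]: "monomial_mat d p ph \<in> carrier_mat d d"
  by (simp add: monomial_mat_def)

lemma monomial_mat_dim [simp]: "dim_row (monomial_mat d p ph) = d" "dim_col (monomial_mat d p ph) = d"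
  by (simp_all add: monomial_mat_def)

lemma permutes_inv_less: "p permutes {..<d} \<Longrightarrow> a < d \<Longrightarrow> inv_into UNIV p a < d"
  by (meson lessThan_iff permutes_inv permutes_in_image)

lemma monomial_mat_mult_index:
  assumes p: "p permutes {..<d}" and F: "F \<in> carrier_mat d b" and k: "k < d" and i: "i < b"
  shows "(monomial_mat d p ph * F) $$ (k, i) = omega ^ ph (inv_into UNIV p k) * F $$ (inv_into UNIV p k, i)"
proof -
  have "(monomial_mat d p ph * F) $$ (k, i) = (\<Sum>j<d. (if k = p j then omega ^ ph j else 0) * F $$ (j, i))"
    using F k i by (simp add: scalar_prod_def atLeast0LessThan monomial_mat_def)
  also have "\<dots> = (\<Sum>j<d. if j = inv_into UNIV p k then omega ^ ph j * F $$ (j, i) else 0)"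
  proof (rule sum.cong[OF refl])
    fix j
    have e: "(k = p j) = (j = inv_into UNIV p k)" using permutes_inv_eq[OF p, of k j] by auto
    show "(if k = p j then omega ^ ph j else 0) * F $$ (j, i) =
        (if j = inv_into UNIV p k then omega ^ ph j * F $$ (j, i) else 0)"
      unfolding e by simp
  qed
  finally show ?thesis using permutes_inv_less[OF p k] by simp
qed

lemma frobenius_sq_monomial_mat_mult:
  assumes p: "p permutes {..<d}" and F: "F \<in> carrier_mat d b"
  shows "frobenius_sq (monomial_mat d p ph * F) = frobenius_sq F"
proof -
  have "frobenius_sq (monomial_mat d p ph * F) = (\<Sum>k<d. \<Sum>i<b. (cmod ((monomial_mat d p ph * F) $$ (k, i)))\<^sup>2)"
    unfolding frobenius_sq_def using F by simp
  also have "\<dots> = (\<Sum>k<d. \<Sum>i<b. (cmod (F $$ (inv_into UNIV p k, i)))\<^sup>2)"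
    by (intro sum.cong refl, subst monomial_mat_mult_index[OF p F]) (auto simp: norm_mult)
  also have "\<dots> = (\<Sum>k<d. \<Sum>i<b. (cmod (F $$ (k, i)))\<^sup>2)"
    using sum.permute[OF permutes_inv[OF p], of "\<lambda>k. \<Sum>i<b. (cmod (F $$ (k, i)))\<^sup>2"]
    by (simp add: comp_def)
  finally show ?thesis unfolding frobenius_sq_def using F by simp
qed

lemma kron_monomial_mat_index:
  assumes p: "p permutes {..<d}" and ab: "a < d" "b < d" and x: "x < d * d"
  shows "kron (monomial_mat d p ph) (monomial_mat d p ph) $$ (a * d + b, x) =
     (if x = inv_into UNIV p a * d + inv_into UNIV p b then omega ^ ph (inv_into UNIV p a) * omega ^ ph (inv_into UNIV p b) else 0)"
proof -
  have "d > 0" using ab by simp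
  then have x12: "x div d < d" "x mod d < d" using x by (simp_all add: less_mult_imp_div_less)
  have ip: "inv_into UNIV p a < d" "inv_into UNIV p b < d" using ab by (simp_all add: permutes_inv_less[OF p])
  have "kron (monomial_mat d p ph) (monomial_mat d p ph) $$ (a * d + b, x) =
      (if a = p (x div d) then omega ^ ph (x div d) else 0) * (if b = p (x mod d) then omega ^ ph (x mod d) else 0)"
    using x ab x12 pair_index_less[OF ab] by (simp add: kron_def monomial_mat_def)
  also have "\<dots> = (if x div d = inv_into UNIV p a \<and> x mod d = inv_into UNIV p b then omega ^ ph (inv_into UNIV p a) * omega ^ ph (inv_into UNIV p b) else 0)"
    using permutes_inv_eq[OF p, of a "x div d"] permutes_inv_eq[OF p, of b "x mod d"] by auto
  also have "(x div d = inv_into UNIV p a \<and> x mod d = inv_into UNIV p b) \<longleftrightarrow> x = inv_into UNIV p a * d + inv_into UNIV p b"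
    using pair_index_eq_iff[OF x12(2) ip(2), of "x div d" "inv_into UNIV p a"] div_mult_mod_eq[of x d] by metis
  finally show ?thesis .
qed

definition twirl_group :: "nat \<Rightarrow> ((nat \<Rightarrow> nat) \<times> (nat \<Rightarrow> nat)) set" where
  "twirl_group d = {p. p permutes {..<d}} \<times> ({..<d} \<rightarrow>\<^sub>E {..<3})"

lemma finite_twirl_group: "finite (twirl_group d)"
  unfolding twirl_group_def by (intro finite_cartesian_product finite_permutations finite_PiE) auto

lemma twirl_group_iff:
  "(p, ph) \<in> twirl_group d \<longleftrightarrow> p permutes {..<d} \<and> (\<forall>s<d. ph s < 3) \<and> (\<forall>s\<ge>d. ph s = undefined)"
  unfolding twirl_group_def by (auto simp: PiE_iff extensional_def)

lemma card_twirl_group_pos: "card (twirl_group d) > 0"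
proof -
  have "(id, \<lambda>s. if s < d then 0 else undefined) \<in> twirl_group d"
    unfolding twirl_group_iff by (auto simp: permutes_id)
  then show ?thesis using finite_twirl_group card_gt_0_iff by blast
qed

text \<open>Left multiplication by the group element \<open>(q, ps)\<close>, on the level of indices.\<close>

definition twirl_shift ::
  "nat \<Rightarrow> (nat \<Rightarrow> nat) \<Rightarrow> (nat \<Rightarrow> nat) \<Rightarrow> (nat \<Rightarrow> nat) \<times> (nat \<Rightarrow> nat) \<Rightarrow> (nat \<Rightarrow> nat) \<times> (nat \<Rightarrow> nat)"
  where "twirl_shift d q ps = (\<lambda>(p, ph). (q \<circ> p, \<lambda>s. if s < d then (ps (p s) + ph s) mod 3 else undefined))"

lemma bij_betw_twirl_shift:
  assumes q: "q permutes {..<d}"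
  shows "bij_betw (twirl_shift d q ps) (twirl_group d) (twirl_group d)"
proof -
  have into: "twirl_shift d q ps ` twirl_group d \<subseteq> twirl_group d"
    using q by (auto simp: twirl_shift_def twirl_group_iff intro: permutes_compose)
  have "inj_on (twirl_shift d q ps) (twirl_group d)"
  proof (rule inj_onI)
    fix x y assume x: "x \<in> twirl_group d" and y: "y \<in> twirl_group d"
      and e: "twirl_shift d q ps x = twirl_shift d q ps y"
    obtain p ph where x': "x = (p, ph)" by (cases x)
    obtain p' ph' where y': "y = (p', ph')" by (cases y)
    have qp: "q \<circ> p = q \<circ> p'" using e unfolding x' y' twirl_shift_def by simp
    have pp: "p = p'"
    proof
      fix s
      have "q (p s) = q (p' s)" using qp by (metis comp_apply)
      then show "p s = p' s" using permutes_inj[OF q] by (meson injD)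
    qed
    have ph: "(\<lambda>s. if s < d then (ps (p s) + ph s) mod 3 else undefined) =
        (\<lambda>s. if s < d then (ps (p s) + ph' s) mod 3 else undefined)"
      using e unfolding x' y' twirl_shift_def pp by simp
    have "ph s = ph' s" for s
    proof (cases "s < d")
      case True
      then have "(ps (p s) + ph s) mod 3 = (ps (p s) + ph' s) mod 3" "ph s < 3" "ph' s < 3"
        using fun_cong[OF ph, of s] x y unfolding x' y' twirl_group_iff by auto
      then show ?thesis by presburger
    qed (use x y x' y' twirl_group_iff in auto)
    then show "x = y" using pp x' y' by auto
  qed
  then show ?thesis
    using endo_inj_surj[OF finite_twirl_group into] unfolding bij_betw_def by simp
qed


definition monomial_kron :: "nat \<Rightarrow> (nat \<Rightarrow> nat) \<Rightarrow> (nat \<Rightarrow> nat) \<Rightarrow> complex mat" where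
  "monomial_kron d p ph = kron (monomial_mat d p ph) (monomial_mat d p ph)"

definition twirl_term :: "nat \<Rightarrow> complex mat \<Rightarrow> (nat \<Rightarrow> nat) \<times> (nat \<Rightarrow> nat) \<Rightarrow> complex mat" where
  "twirl_term d X x = monomial_kron d (fst x) (snd x) * X * adj (monomial_kron d (fst x) (snd x))"

definition twirl :: "nat \<Rightarrow> complex mat \<Rightarrow> complex mat" where
  "twirl d X = mat (d * d) (d * d) (\<lambda>(r, t). \<Sum>x\<in>twirl_group d. twirl_term d X x $$ (r, t))"

lemma monomial_kron_carrier_mat [simp]: "monomial_kron d p ph \<in> carrier_mat (d * d) (d * d)"
  using kron_carrier_mat[of "monomial_mat d p ph" "monomial_mat d p ph"] by (simp add: monomial_kron_def)

lemma twirl_carrier_mat [simp]: "twirl d X \<in> carrier_mat (d * d) (d * d)"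
  by (simp add: twirl_def)

lemma twirl_dim [simp]: "dim_row (twirl d X) = d * d" "dim_col (twirl d X) = d * d"
  by (simp_all add: twirl_def)

lemma twirl_term_index:
  assumes p: "p permutes {..<d}" and X: "X \<in> carrier_mat (d * d) (d * d)"
    and ab: "a < d" "b < d" "a' < d" "b' < d"
  shows "twirl_term d X (p, ph) $$ (a * d + b, a' * d + b') =
     (omega ^ ph (inv_into UNIV p a) * omega ^ ph (inv_into UNIV p b))
     * X $$ (inv_into UNIV p a * d + inv_into UNIV p b, inv_into UNIV p a' * d + inv_into UNIV p b')
     * cnj (omega ^ ph (inv_into UNIV p a') * omega ^ ph (inv_into UNIV p b'))"
proof -
  let ?U = "monomial_kron d p ph"
  define x0 where "x0 = inv_into UNIV p a * d + inv_into UNIV p b"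
  define y0 where "y0 = inv_into UNIV p a' * d + inv_into UNIV p b'"
  define c1 where "c1 = omega ^ ph (inv_into UNIV p a) * omega ^ ph (inv_into UNIV p b)"
  define c2 where "c2 = omega ^ ph (inv_into UNIV p a') * omega ^ ph (inv_into UNIV p b')"
  have x0: "x0 < d * d" and y0: "y0 < d * d"
    unfolding x0_def y0_def by (intro pair_index_less permutes_inv_less[OF p] ab)+
  have r: "a * d + b < d * d" "a' * d + b' < d * d" using ab by (auto intro: pair_index_less)
  have "twirl_term d X (p, ph) $$ (a * d + b, a' * d + b') =
      (\<Sum>x<d * d. \<Sum>y<d * d. ?U $$ (a * d + b, x) * X $$ (x, y) * cnj (?U $$ (a' * d + b', y)))"
    unfolding twirl_term_def fst_conv snd_conv by (rule index_mult_mult_adj[OF _ X _ r]) simp_all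
  also have "\<dots> = (\<Sum>x<d * d. \<Sum>y<d * d. (if x = x0 then c1 else 0) * X $$ (x, y) * cnj (if y = y0 then c2 else 0))"
    unfolding monomial_kron_def x0_def y0_def c1_def c2_def
    by (intro sum.cong refl) (simp add: kron_monomial_mat_index[OF p] ab)
  also have "\<dots> = (\<Sum>x<d * d. \<Sum>y<d * d. if x = x0 then if y = y0 then c1 * X $$ (x, y) * cnj c2 else 0 else 0)"
    by (intro sum.cong refl) auto
  also have "\<dots> = c1 * X $$ (x0, y0) * cnj c2"
    using x0 y0 by (rule sum_sum_delta)
  finally show ?thesis unfolding x0_def y0_def c1_def c2_def .
qed

lemma twirl_index:
  "r < d * d \<Longrightarrow> t < d * d \<Longrightarrow> twirl d X $$ (r, t) = (\<Sum>x\<in>twirl_group d. twirl_term d X x $$ (r, t))"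
  by (simp add: twirl_def)

lemma twirl_term_shift_index:
  assumes q: "q permutes {..<d}" and X: "X \<in> carrier_mat (d * d) (d * d)"
    and ab: "a < d" "b < d" "a' < d" "b' < d" and x: "x \<in> twirl_group d"
  shows "twirl_term d X (twirl_shift d q ps x) $$ (a * d + b, a' * d + b') =
    (omega ^ ps (inv_into UNIV q a) * omega ^ ps (inv_into UNIV q b))
    * twirl_term d X x $$ (inv_into UNIV q a * d + inv_into UNIV q b, inv_into UNIV q a' * d + inv_into UNIV q b')
    * cnj (omega ^ ps (inv_into UNIV q a') * omega ^ ps (inv_into UNIV q b'))"
proof -
  define iq where "iq = inv_into UNIV q"
  have iq: "iq a < d" "iq b < d" "iq a' < d" "iq b' < d"
    unfolding iq_def using ab by (auto intro: permutes_inv_less[OF q])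
  obtain p ph where x': "x = (p, ph)" by (cases x)
  have p: "p permutes {..<d}" using x unfolding x' twirl_group_iff by auto
  let ?ip = "inv_into UNIV p"
  define ph' where "ph' = (\<lambda>s. if s < d then (ps (p s) + ph s) mod 3 else undefined)"
  have shift_x: "twirl_shift d q ps x = (q \<circ> p, ph')" unfolding x' twirl_shift_def ph'_def by simp
  have inv_qp: "inv_into UNIV (q \<circ> p) = ?ip \<circ> iq"
    unfolding iq_def using o_inv_distrib[OF permutes_bij[OF q] permutes_bij[OF p]] .
  have ph': "omega ^ ph' (?ip (iq z)) = omega ^ ps (iq z) * omega ^ ph (?ip (iq z))" if "z < d" for z
  proof -
    have "iq z < d" unfolding iq_def using permutes_inv_less[OF q that] .
    then have "?ip (iq z) < d" using permutes_inv_less[OF p] by blast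
    then show ?thesis
      unfolding ph'_def using permutes_inverses(1)[OF p] omega_power_add_mod by simp
  qed
  have "twirl_term d X (twirl_shift d q ps x) $$ (a * d + b, a' * d + b') =
      (omega ^ ph' (?ip (iq a)) * omega ^ ph' (?ip (iq b)))
      * X $$ (?ip (iq a) * d + ?ip (iq b), ?ip (iq a') * d + ?ip (iq b'))
      * cnj (omega ^ ph' (?ip (iq a')) * omega ^ ph' (?ip (iq b')))"
    unfolding shift_x using twirl_term_index[OF permutes_compose[OF p q] X ab] by (simp add: inv_qp)
  also have "\<dots> = (omega ^ ps (iq a) * omega ^ ps (iq b)) * ((omega ^ ph (?ip (iq a)) * omega ^ ph (?ip (iq b)))
      * X $$ (?ip (iq a) * d + ?ip (iq b), ?ip (iq a') * d + ?ip (iq b'))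
      * cnj (omega ^ ph (?ip (iq a')) * omega ^ ph (?ip (iq b')))) * cnj (omega ^ ps (iq a') * omega ^ ps (iq b'))"
    using ph' ab by (simp add: mult_ac)
  also have "\<dots> = (omega ^ ps (iq a) * omega ^ ps (iq b)) * twirl_term d X x $$ (iq a * d + iq b, iq a' * d + iq b')
      * cnj (omega ^ ps (iq a') * omega ^ ps (iq b'))"
    unfolding x' by (simp add: twirl_term_index[OF p X iq])
  finally show ?thesis unfolding iq_def .
qed

lemma twirl_index_shift:
  assumes q: "q permutes {..<d}" and X: "X \<in> carrier_mat (d * d) (d * d)"
    and ab: "a < d" "b < d" "a' < d" "b' < d"
  shows "twirl d X $$ (a * d + b, a' * d + b') =
    (omega ^ ps (inv_into UNIV q a) * omega ^ ps (inv_into UNIV q b))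
    * twirl d X $$ (inv_into UNIV q a * d + inv_into UNIV q b, inv_into UNIV q a' * d + inv_into UNIV q b')
    * cnj (omega ^ ps (inv_into UNIV q a') * omega ^ ps (inv_into UNIV q b'))"
proof -
  define iq where "iq = inv_into UNIV q"
  have iq: "iq a < d" "iq b < d" "iq a' < d" "iq b' < d"
    unfolding iq_def using ab by (auto intro: permutes_inv_less[OF q])
  define c1 where "c1 = omega ^ ps (iq a) * omega ^ ps (iq b)"
  define c2 where "c2 = omega ^ ps (iq a') * omega ^ ps (iq b')"
  have "twirl d X $$ (a * d + b, a' * d + b') =
      (\<Sum>x\<in>twirl_group d. twirl_term d X (twirl_shift d q ps x) $$ (a * d + b, a' * d + b'))"
    using sum.reindex_bij_betw[OF bij_betw_twirl_shift[OF q, of ps], of "\<lambda>x. twirl_term d X x $$ (a * d + b, a' * d + b')"]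
      twirl_index pair_index_less ab by simp
  also have "\<dots> = (\<Sum>x\<in>twirl_group d. c1 * twirl_term d X x $$ (iq a * d + iq b, iq a' * d + iq b') * cnj c2)"
    unfolding c1_def c2_def iq_def using twirl_term_shift_index[OF q X ab] by (rule sum.cong[OF refl])
  also have "\<dots> = c1 * twirl d X $$ (iq a * d + iq b, iq a' * d + iq b') * cnj c2"
    using twirl_index pair_index_less iq by (simp add: sum_distrib_left sum_distrib_right)
  finally show ?thesis unfolding c1_def c2_def iq_def .
qed

lemma twirl_index_permute:
  assumes q: "q permutes {..<d}" and X: "X \<in> carrier_mat (d * d) (d * d)"
    and ab: "a < d" "b < d" "a' < d" "b' < d"
  shows "twirl d X $$ (q a * d + q b, q a' * d + q b') = twirl d X $$ (a * d + b, a' * d + b')"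
proof -
  have "q a < d" "q b < d" "q a' < d" "q b' < d" using ab permutes_in_image[OF q] by auto
  from twirl_index_shift[OF q X this, of "\<lambda>_. 0"] show ?thesis
    by (simp add: permutes_inverses(2)[OF q])
qed

text \<open>The diagonal unitary putting the phase \<open>\<omega>\<close> on the basis vector \<open>x\<close> alone multiplies
  \<open>\<langle>ab|X|a'b'\<rangle>\<close> by \<open>\<omega>\<^sup>c \<omega>\<^sup>2\<^sup>c\<^sup>'\<close>, where \<open>c\<close> and \<open>c'\<close> count the occurrences of \<open>x\<close>
  in \<open>ab\<close> and \<open>a'b'\<close>; this factor is not \<open>1\<close> unless \<open>{a, b} = {a', b'}\<close> as multisets.\<close>

lemma twirl_index_eq_0:
  assumes X: "X \<in> carrier_mat (d * d) (d * d)"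
    and ab: "a < d" "b < d" "a' < d" "b' < d"
    and ne: "\<not> ((a' = a \<and> b' = b) \<or> (a' = b \<and> b' = a))"
  shows "twirl d X $$ (a * d + b, a' * d + b') = 0"
proof -
  have "\<exists>x\<in>{a, b}. (if a = x then 1 else 0) + (if b = x then 1 else 0) \<noteq>
      (if a' = x then 1 else (0::nat)) + (if b' = x then 1 else 0)"
    using ne by auto
  then obtain x where
    c: "(if a = x then 1 else 0) + (if b = x then 1 else 0) \<noteq> (if a' = x then 1 else (0::nat)) + (if b' = x then 1 else 0)"
    by blast
  define ps where "ps = (\<lambda>s::nat. if s = x then 1 else (0::nat))"
  define c1 where "c1 = ps a + ps b"
  define c2 where "c2 = ps a' + ps b'"
  have "(c1 + 2 * c2) mod 3 \<noteq> 0"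
    using c unfolding c1_def c2_def ps_def by (auto split: if_splits)
  then have w: "omega ^ (c1 + 2 * c2) \<noteq> 1"
    using omega_power_eq_1_iff by simp
  have "twirl d X $$ (a * d + b, a' * d + b') =
      (omega ^ ps a * omega ^ ps b) * twirl d X $$ (a * d + b, a' * d + b') * cnj (omega ^ ps a' * omega ^ ps b')"
    using twirl_index_shift[OF permutes_id X ab, of ps] by (simp add: inv_id)
  also have "\<dots> = omega ^ (c1 + 2 * c2) * twirl d X $$ (a * d + b, a' * d + b')"
  proof -
    have "cnj (omega ^ ps a' * omega ^ ps b') = omega ^ (2 * c2)" unfolding c2_def
      by (simp only: complex_cnj_mult cnj_omega_power power_add[symmetric] distrib_left)
    moreover have "omega ^ ps a * omega ^ ps b = omega ^ c1" unfolding c1_def by (simp only: power_add)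
    ultimately show ?thesis by (simp add: power_add mult_ac)
  qed
  finally have "(1 - omega ^ (c1 + 2 * c2)) * twirl d X $$ (a * d + b, a' * d + b') = 0"
    by (simp add: algebra_simps)
  then show ?thesis using w by simp
qed

text \<open>Matrices on \<open>\<complex>\<^sup>d \<otimes> \<complex>\<^sup>d\<close> invariant under the twirl: the only free entries are
  \<open>\<langle>00|S|00\<rangle>\<close>, \<open>\<langle>01|S|01\<rangle>\<close> and \<open>\<langle>01|S|10\<rangle>\<close>, at indices \<open>0\<close>, \<open>1\<close> and \<open>d\<close>.\<close>

definition bc_form :: "nat \<Rightarrow> complex mat \<Rightarrow> bool" where
  "bc_form d S \<longleftrightarrow> (\<forall>a<d. \<forall>b<d. \<forall>a'<d. \<forall>b'<d. S $$ (a * d + b, a' * d + b') =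
     (if a = b then (if a' = a \<and> b' = a then S $$ (0, 0) else 0)
      else if a' = a \<and> b' = b then S $$ (1, 1)
      else if a' = b \<and> b' = a then S $$ (1, d) else 0))"

lemma exists_permutes_0_1:
  fixes a b d :: nat
  assumes "a < d" "b < d" "a \<noteq> b"
  shows "\<exists>q. q permutes {..<d} \<and> q 0 = a \<and> q 1 = b"
proof -
  define j where "j = Transposition.transpose 0 a 1"
  define q where "q = Transposition.transpose j b \<circ> Transposition.transpose 0 a"
  have d: "0 < d" "1 < d" using assms by auto
  then have "j < d" unfolding j_def using assms by (auto simp: Transposition.transpose_def)
  then have "q permutes {..<d}" unfolding q_def
    using assms d by (intro permutes_compose permutes_swap_id) auto
  moreover have "j \<noteq> a" unfolding j_def by (auto simp: Transposition.transpose_def)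
  then have "q 0 = a" unfolding q_def using assms(3) by (simp add: Transposition.transpose_def)
  moreover have "q 1 = b" unfolding q_def j_def by simp
  ultimately show ?thesis by blast
qed

lemma bc_form_twirl:
  assumes X: "X \<in> carrier_mat (d * d) (d * d)"
  shows "bc_form d (twirl d X)"
  unfolding bc_form_def
proof (intro allI impI)
  fix a b a' b' assume ab: "a < d" "b < d" "a' < d" "b' < d"
  show "twirl d X $$ (a * d + b, a' * d + b') =
     (if a = b then (if a' = a \<and> b' = a then twirl d X $$ (0, 0) else 0)
      else if a' = a \<and> b' = b then twirl d X $$ (1, 1)
      else if a' = b \<and> b' = a then twirl d X $$ (1, d) else 0)"
  proof (cases "a = b")
    case True
    have q: "Transposition.transpose 0 a permutes {..<d}" using ab by (intro permutes_swap_id) auto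
    have "twirl d X $$ (a * d + a, a * d + a) = twirl d X $$ (0 * d + 0, 0 * d + 0)"
      using twirl_index_permute[OF q X, of 0 0 0 0] ab by simp
    then show ?thesis using True twirl_index_eq_0[OF X ab] by auto
  next
    case False
    then obtain q where q: "q permutes {..<d}" "q 0 = a" "q 1 = b"
      using exists_permutes_0_1 ab by blast
    have d: "0 < d" "1 < d" using ab False by auto
    have "twirl d X $$ (a * d + b, a * d + b) = twirl d X $$ (0 * d + 1, 0 * d + 1)"
      "twirl d X $$ (a * d + b, b * d + a) = twirl d X $$ (0 * d + 1, 1 * d + 0)"
      using twirl_index_permute[OF q(1) X, of 0 1 0 1] twirl_index_permute[OF q(1) X, of 0 1 1 0] q d
      by simp_all
    then show ?thesis using False twirl_index_eq_0[OF X ab] by auto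
  qed
qed

definition swap_trace :: "nat \<Rightarrow> complex mat \<Rightarrow> complex" where
  "swap_trace d S = (\<Sum>k<d. \<Sum>l<d. S $$ (k * d + l, l * d + k))"

lemma swap_trace_twirl:
  assumes X: "X \<in> carrier_mat (d * d) (d * d)"
  shows "swap_trace d (twirl d X) = of_nat (card (twirl_group d)) * swap_trace d X"
proof -
  have invariant: "swap_trace d (twirl_term d X x) = swap_trace d X"
    if x: "x \<in> twirl_group d" for x
  proof -
    obtain p ph where x': "x = (p, ph)" by (cases x)
    have p: "p permutes {..<d}" using x unfolding x' twirl_group_iff by auto
    define ip where "ip = inv_into UNIV p"
    have ip: "ip permutes {..<d}" unfolding ip_def using permutes_inv[OF p] .
    have "twirl_term d X x $$ (k * d + l, l * d + k) = X $$ (ip k * d + ip l, ip l * d + ip k)"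
      if "k < d" "l < d" for k l
    proof -
      have "twirl_term d X x $$ (k * d + l, l * d + k) = (cnj (omega ^ ph (ip k)) * omega ^ ph (ip k))
          * (cnj (omega ^ ph (ip l)) * omega ^ ph (ip l)) * X $$ (ip k * d + ip l, ip l * d + ip k)"
        unfolding x' ip_def using twirl_term_index[OF p X that that(2,1)] by (simp add: mult_ac)
      then show ?thesis by (simp only: cnj_omega_power_mult mult_1_left)
    qed
    then have "swap_trace d (twirl_term d X x) = (\<Sum>k<d. \<Sum>l<d. X $$ (ip k * d + ip l, ip l * d + ip k))"
      unfolding swap_trace_def by (intro sum.cong refl) auto
    also have "\<dots> = (\<Sum>k<d. \<Sum>l<d. X $$ (ip k * d + l, l * d + ip k))"
    proof (rule sum.cong[OF refl])
      fix k
      show "(\<Sum>l<d. X $$ (ip k * d + ip l, ip l * d + ip k)) = (\<Sum>l<d. X $$ (ip k * d + l, l * d + ip k))"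
        using sum.permute[OF ip, of "\<lambda>l. X $$ (ip k * d + l, l * d + ip k)"] by (simp add: comp_def)
    qed
    also have "\<dots> = swap_trace d X"
      unfolding swap_trace_def
      using sum.permute[OF ip, of "\<lambda>k. \<Sum>l<d. X $$ (k * d + l, l * d + k)"] by (simp add: comp_def)
    finally show ?thesis .
  qed
  have "swap_trace d (twirl d X) = (\<Sum>x\<in>twirl_group d. swap_trace d (twirl_term d X x))"
    unfolding swap_trace_def using pair_index_less
    by (simp add: twirl_index sum.swap[of _ "twirl_group d"])
  also have "\<dots> = of_nat (card (twirl_group d)) * swap_trace d X"
    using invariant by simp
  finally show ?thesis .
qed


section \<open>The states \<open>\<rho>\<^sub>b\<^sub>c\<close>\<close>

lemma ket2_index: "r < d * d \<Longrightarrow> ket2 d k l $ r = (if r = k * d + l then 1 else 0)"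
  unfolding ket2_def unit_vec_def by simp

lemma ket2_dim [simp]: "dim_vec (ket2 d k l) = d * d"
  by (simp add: ket2_def)

lemma psi_dim [simp]: "dim_vec (psi s d k l) = d * d"
  by (simp add: psi_def)

lemma psi_index:
  "r < d * d \<Longrightarrow> psi s d k l $ r =
    complex_of_real (1 / sqrt 2) * ((if r = k * d + l then 1 else 0) + s * (if r = l * d + k then 1 else 0))"
  by (simp add: psi_def ket2_index)

lemma proj_psi_index:
  assumes "r < d * d" "t < d * d" "cnj s = s"
  shows "proj (psi s d k l) $$ (r, t) = (1/2) * ((if r = k * d + l then 1 else 0) + s * (if r = l * d + k then 1 else 0))
      * ((if t = k * d + l then 1 else 0) + s * (if t = l * d + k then 1 else 0))"
proof -
  have half: "complex_of_real (1 / sqrt 2) * cnj (complex_of_real (1 / sqrt 2)) = 1/2"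
    by (simp flip: of_real_mult)
  have "proj (psi s d k l) $$ (r, t) = complex_of_real (1 / sqrt 2) * cnj (complex_of_real (1 / sqrt 2)) *
      (((if r = k * d + l then 1 else 0) + s * (if r = l * d + k then 1 else 0))
      * cnj ((if t = k * d + l then 1 else 0) + s * (if t = l * d + k then 1 else 0)))"
    using assms by (simp add: proj_def psi_index mult_ac)
  also have "cnj ((if t = k * d + l then 1 else 0) + s * (if t = l * d + k then 1 else 0)) =
      (if t = k * d + l then 1 else 0) + s * (if t = l * d + k then 1 else 0)"
    using assms(3) by simp
  finally show ?thesis unfolding half by simp
qed

lemma proj_psi_pair_index:
  assumes ij: "i < d" "j < d" "i' < d" "j' < d" and kl': "k < l" "l < d" "k < d"
    and s: "cnj s = s" "s * s = 1"
  shows "proj (psi s d k l) $$ (i * d + j, i' * d + j') =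
    (if (k, l) = (min i j, max i j) \<and> i \<noteq> j
     then (1/2) * ((if i' = i \<and> j' = j then 1 else 0) + s * (if i' = j \<and> j' = i then 1 else 0)) else 0)"
proof -
  have r: "i * d + j < d * d" "i' * d + j' < d * d" using ij by (auto intro: pair_index_less)
  define e where "e = (\<lambda>k l. (if i' * d + j' = k * d + l then 1 else (0::complex)))"
  have e: "\<And>k l. k < d \<Longrightarrow> l < d \<Longrightarrow> e k l = (if i' = k \<and> j' = l then 1 else 0)"
    unfolding e_def using pair_index_eq_iff[OF ij(4)] by auto
  have "proj (psi s d k l) $$ (i*d+j, i'*d+j') = (1/2) * ((if i*d+j = k*d+l then 1 else 0) + s * (if i*d+j = l*d+k then 1 else 0))
    * (e k l + s * e l k)"
    unfolding e_def using proj_psi_index[OF r s(1)] by simp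
  also have "\<dots> = (1/2) * ((if i = k \<and> j = l then 1 else 0) + s * (if i = l \<and> j = k then 1 else 0)) * (e k l + s * e l k)"
    using pair_index_eq_iff[OF ij(2) kl'(2), of i k] pair_index_eq_iff[OF ij(2) kl'(3), of i l] by simp
  also have "\<dots> = (if (k,l) = (min i j, max i j) \<and> i \<noteq> j then (1/2) * ((if i' = i \<and> j' = j then 1 else 0) + s * (if i' = j \<and> j' = i then 1 else 0)) else 0)"
  proof -
    have ekl: "e k l = (if i' = k \<and> j' = l then 1 else 0)" "e l k = (if i' = l \<and> j' = k then 1 else 0)"
      using e kl' by auto
    consider (lt) "i < j" | (eq) "i = j" | (gt) "j < i" by linarith
    then show ?thesis
    proof cases
      case lt
      have z: "(if i = l \<and> j = k then 1 else 0) = (0::complex)" using lt kl' by auto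
      show ?thesis
      proof (cases "k = i \<and> l = j")
        case True
        then show ?thesis using lt z unfolding ekl by (simp add: min_def max_def)
      next
        case False
        have c1: "\<not> (i = k \<and> j = l)" "\<not> (i = l \<and> j = k)" using False lt kl' by auto
        have c3: "\<not> ((k,l) = (min i j, max i j) \<and> i \<noteq> j)" using False lt by (simp add: min_def max_def)
        show ?thesis by (simp only: if_not_P[OF c1(1)] if_not_P[OF c1(2)] if_not_P[OF c3]) simp
      qed
    next
      case eq
      have z: "(if i = l \<and> j = k then 1 else 0) = (0::complex)" "(if i = k \<and> j = l then 1 else 0) = (0::complex)"
        using eq kl' by auto
      show ?thesis using eq z by simp
    next
      case gt
      have z: "(if i = k \<and> j = l then 1 else 0) = (0::complex)" using gt kl' by auto
      show ?thesis
      proof (cases "k = j \<and> l = i")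
        case True
        have "(1/2) * (0 + s * 1) * (e k l + s * e l k) = (1/2) * (s * e j i + (s * s) * e i j)"
          using True by (simp only: add_0_left mult_1_right distrib_left mult.assoc)
        also have "\<dots> = (1/2) * ((if i' = i \<and> j' = j then 1 else 0) + s * (if i' = j \<and> j' = i then 1 else 0))"
          using True ekl s(2) by (simp add: algebra_simps)
        finally show ?thesis using gt z True by (simp add: min_def max_def)
      next
        case False
        have c1: "\<not> (i = k \<and> j = l)" "\<not> (i = l \<and> j = k)" using False gt kl' by auto
        have c3: "\<not> ((k,l) = (min i j, max i j) \<and> i \<noteq> j)" using False gt by (simp add: min_def max_def)
        show ?thesis by (simp only: if_not_P[OF c1(1)] if_not_P[OF c1(2)] if_not_P[OF c3]) simp
      qed
    qed
  qed
  finally show ?thesis .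
qed

lemma sum_proj_psi_index:
  assumes ij: "i < d" "j < d" "i' < d" "j' < d" and s: "cnj s = s" "s * s = 1"
  shows "(\<Sum>(k, l)\<in>{(k, l). k < l \<and> l < d}. proj (psi s d k l) $$ (i * d + j, i' * d + j')) =
     (if i = j then 0 else (1/2) * ((if i' = i \<and> j' = j then 1 else 0) + s * (if i' = j \<and> j' = i then 1 else 0)))"
proof -
  define P where "P = {(k, l). k < l \<and> l < (d::nat)}"
  define c where "c = (1/2) * ((if i' = i \<and> j' = j then 1 else 0) + s * (if i' = j \<and> j' = i then 1 else (0::complex)))"
  have "(\<Sum>(k, l)\<in>P. proj (psi s d k l) $$ (i * d + j, i' * d + j')) =
      (\<Sum>x\<in>P. if x = (min i j, max i j) \<and> i \<noteq> j then c else 0)"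
  proof (rule sum.cong[OF refl])
    fix x assume "x \<in> P"
    then obtain k l where x: "x = (k, l)" "k < l" "l < d" unfolding P_def by auto
    then show "(case x of (k, l) \<Rightarrow> proj (psi s d k l) $$ (i * d + j, i' * d + j')) =
        (if x = (min i j, max i j) \<and> i \<noteq> j then c else 0)"
      using proj_psi_pair_index[OF ij x(2,3) less_trans[OF x(2,3)] s] unfolding c_def by simp
  qed
  also have "\<dots> = (if i = j then 0 else c)"
  proof (cases "i = j")
    case False
    have "finite P" unfolding P_def by (rule finite_subset[of _ "{..<d} \<times> {..<d}"]) auto
    moreover have "(min i j, max i j) \<in> P" using False ij unfolding P_def by (auto simp: min_def max_def)
    ultimately show ?thesis using False by (simp add: sum.delta')
  qed simp
  finally show ?thesis unfolding P_def c_def .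
qed

lemma rho_bc_index:
  assumes ij: "i < d" "j < d" "i' < d" "j' < d"
  shows "rho_bc d a b c $$ (i * d + j, i' * d + j') =
    (if i = j then (if i' = i \<and> j' = i then complex_of_real a else 0)
     else if i' = i \<and> j' = j then complex_of_real ((b + c) / 2)
     else if i' = j \<and> j' = i then complex_of_real ((c - b) / 2) else 0)"
proof -
  have r: "i * d + j < d * d" "i' * d + j' < d * d" using ij by (auto intro: pair_index_less)
  have diag: "(\<Sum>k<d. proj (ket2 d k k) $$ (i * d + j, i' * d + j')) = (if i = j \<and> i' = i \<and> j' = i then 1 else 0)"
  proof -
    have "(\<Sum>k<d. proj (ket2 d k k) $$ (i * d + j, i' * d + j')) =
        (\<Sum>k<d. if k = i then (if i = j \<and> i' = i \<and> j' = i then 1 else 0) else 0)"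
      using r ij by (intro sum.cong refl) (auto simp: proj_def ket2_def unit_vec_def pair_index_eq_iff)
    then show ?thesis using ij by simp
  qed
  show ?thesis
    unfolding rho_bc_def using r ij
    by (simp add: diag sum_proj_psi_index)
qed


lemma ptrans_index:
  "r < n * m \<Longrightarrow> t < n * m \<Longrightarrow> ptrans n m \<rho> $$ (r, t) = \<rho> $$ ((r div m) * m + t mod m, (t div m) * m + r mod m)"
  by (simp add: ptrans_def)

lemma ptrans_dim [simp]: "dim_row (ptrans n m \<rho>) = n * m" "dim_col (ptrans n m \<rho>) = n * m"
  by (simp_all add: ptrans_def)

lemma adj_ptrans:
  assumes R: "\<rho> \<in> carrier_mat (n * m) (n * m)" and h: "adj \<rho> = \<rho>"
  shows "adj (ptrans n m \<rho>) = ptrans n m \<rho>"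
proof (rule eq_matI)
  fix r t assume "r < dim_row (ptrans n m \<rho>)" "t < dim_col (ptrans n m \<rho>)"
  then have rt: "r < n * m" "t < n * m" by (simp_all add: ptrans_def)
  then have "m > 0" by (auto intro!: Nat.gr0I)
  then have ij: "r div m < n" "t div m < n" "r mod m < m" "t mod m < m"
    using rt by (simp_all add: less_mult_imp_div_less)
  have "(r div m) * m + t mod m < n * m" "(t div m) * m + r mod m < n * m"
    using pair_index_less[OF ij(1,4)] pair_index_less[OF ij(2,3)] .
  then show "adj (ptrans n m \<rho>) $$ (r, t) = ptrans n m \<rho> $$ (r, t)"
    using rt hermitian_index[OF h] R by (simp add: ptrans_index)
qed (simp_all add: ptrans_def)

lemma ptrans_pair_index:
  assumes "i < n" "j < m" "i' < n" "j' < m"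
  shows "ptrans n m \<rho> $$ (i * m + j, i' * m + j') = \<rho> $$ (i * m + j', i' * m + j)"
proof -
  have "m > 0" using assms by simp
  then show ?thesis using assms by (simp add: ptrans_index pair_index_less)
qed

lemma qform_ptrans:
  "qform (ptrans n m \<rho>) v = (\<Sum>x1<n. \<Sum>x2<m. \<Sum>y1<n. \<Sum>y2<m.
      \<rho> $$ (x1 * m + x2, y1 * m + y2) * cnj (v $ (x1 * m + y2)) * v $ (y1 * m + x2))"
proof -
  have "qform (ptrans n m \<rho>) v = (\<Sum>r<n * m. \<Sum>t<n * m. cnj (v $ r) * ptrans n m \<rho> $$ (r, t) * v $ t)"
    unfolding qform_def by simp
  also have "\<dots> = (\<Sum>x1<n. \<Sum>y2<m. \<Sum>y1<n. \<Sum>x2<m.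
      cnj (v $ (x1 * m + y2)) * ptrans n m \<rho> $$ (x1 * m + y2, y1 * m + x2) * v $ (y1 * m + x2))"
    by (simp only: sum_lessThan_pair_index)
  also have "\<dots> = (\<Sum>x1<n. \<Sum>y2<m. \<Sum>y1<n. \<Sum>x2<m.
      \<rho> $$ (x1 * m + x2, y1 * m + y2) * cnj (v $ (x1 * m + y2)) * v $ (y1 * m + x2))"
    by (intro sum.cong refl) (simp add: ptrans_pair_index mult_ac)
  also have "\<dots> = (\<Sum>x1<n. \<Sum>x2<m. \<Sum>y1<n. \<Sum>y2<m.
      \<rho> $$ (x1 * m + x2, y1 * m + y2) * cnj (v $ (x1 * m + y2)) * v $ (y1 * m + x2))"
  proof (rule sum.cong[OF refl])
    fix x1
    let ?f = "\<lambda>x2 y1 y2. \<rho> $$ (x1 * m + x2, y1 * m + y2) * cnj (v $ (x1 * m + y2)) * v $ (y1 * m + x2)"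
    have "(\<Sum>y2<m. \<Sum>y1<n. \<Sum>x2<m. ?f x2 y1 y2) = (\<Sum>y1<n. \<Sum>y2<m. \<Sum>x2<m. ?f x2 y1 y2)"
      by (rule sum.swap)
    also have "\<dots> = (\<Sum>y1<n. \<Sum>x2<m. \<Sum>y2<m. ?f x2 y1 y2)"
      by (rule sum.cong[OF refl], rule sum.swap)
    also have "\<dots> = (\<Sum>x2<m. \<Sum>y1<n. \<Sum>y2<m. ?f x2 y1 y2)"
      by (rule sum.swap)
    finally show "(\<Sum>y2<m. \<Sum>y1<n. \<Sum>x2<m. ?f x2 y1 y2) = (\<Sum>x2<m. \<Sum>y1<n. \<Sum>y2<m. ?f x2 y1 y2)" .
  qed
  finally show ?thesis .
qed

text \<open>The unnormalised maximally entangled vector \<open>\<Sum>\<^sub>k |kk\<rangle>\<close>.\<close>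

definition max_ent_vec :: "nat \<Rightarrow> complex vec" where
  "max_ent_vec d = vec (d * d) (\<lambda>r. if r div d = r mod d then 1 else 0)"

lemma max_ent_vec_pair_index: "i < d \<Longrightarrow> j < d \<Longrightarrow> max_ent_vec d $ (i * d + j) = (if i = j then 1 else 0)"
  unfolding max_ent_vec_def by (simp add: pair_index_less)

lemma qform_ptrans_max_ent_vec: "qform (ptrans d d S) (max_ent_vec d) = swap_trace d S"
proof -
  have "qform (ptrans d d S) (max_ent_vec d) = (\<Sum>x1<d. \<Sum>x2<d. \<Sum>y1<d. \<Sum>y2<d.
      if y1 = x2 then if y2 = x1 then S $$ (x1 * d + x2, y1 * d + y2) else 0 else 0)"
    unfolding qform_ptrans by (intro sum.cong refl) (auto simp: max_ent_vec_pair_index)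
  then show ?thesis by (simp add: swap_trace_def sum_sum_delta)
qed

lemma not_psd_ptrans_if_swap_trace_neg:
  assumes "Re (swap_trace d S) < 0"
  shows "\<not> psd (ptrans d d S)"
proof
  assume "psd (ptrans d d S)"
  moreover have "max_ent_vec d \<in> carrier_vec (dim_row (ptrans d d S))"
    by (simp add: max_ent_vec_def ptrans_def)
  ultimately have "0 \<le> Re (qform (ptrans d d S) (max_ent_vec d))"
    unfolding psd_iff_qform by blast
  then show False using assms by (simp add: qform_ptrans_max_ent_vec)
qed


section \<open>Local filtering followed by the twirl\<close>

lemma frobenius_sq_smult: "frobenius_sq (c \<cdot>\<^sub>m A) = (cmod c)\<^sup>2 * frobenius_sq A"
  unfolding frobenius_sq_def by (simp add: norm_mult power_mult_distrib sum_distrib_left)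

lemma frobenius_sq_one: "frobenius_sq (1\<^sub>m k) = real k"
proof -
  have "frobenius_sq (1\<^sub>m k) = (\<Sum>a<k. \<Sum>b<k. if a = b then 1 else 0)"
    unfolding frobenius_sq_def by (intro sum.cong refl) auto
  then show ?thesis by simp
qed

lemma frobenius_sq_adj: "frobenius_sq (adj A) = frobenius_sq A"
  unfolding frobenius_sq_def by (simp add: sum.swap[of _ "{..<dim_row A}"])

lemma exists_scale_le_1:
  fixes g N :: real
  assumes "0 \<le> g" "0 \<le> N"
  obtains t where "t > 0" "\<And>x. 0 \<le> x \<Longrightarrow> x \<le> N \<Longrightarrow> g * (t * x) \<le> 1 \<and> t * x \<le> 1"
proof
  define t where "t = 1 / ((g + 1) * (N + 1))"
  show t: "t > 0" unfolding t_def using assms by simp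
  fix x assume x: "0 \<le> x" "x \<le> N"
  have "t * x \<le> t * (N + 1)" using x t by (intro mult_left_mono) auto
  also have "\<dots> = 1 / (g + 1)" unfolding t_def using assms by simp
  finally have "(g + 1) * (t * x) \<le> 1" using assms by (simp add: field_simps)
  moreover have "0 \<le> g * (t * x)" "0 \<le> t * x" using assms x t by simp_all
  ultimately show "g * (t * x) \<le> 1 \<and> t * x \<le> 1" by (simp add: algebra_simps)
qed

text \<open>Filters \<open>F\<^sub>A\<close>, \<open>F\<^sub>B\<close> with \<open>F\<^sub>A\<^sup>T F\<^sub>B\<^sup>* = \<kappa> V\<^sup>*\<close>, where \<open>V\<close> is the coefficient matrix
  of \<open>v\<close>: one of them is a multiple of the identity and the other one of \<open>V\<close>.\<close>

lemma exists_filters: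
  fixes v :: "complex vec" and g :: real
  assumes "0 \<le> g"
  shows "\<exists>FA FB \<kappa>. FA \<in> carrier_mat (min n m) n \<and> FB \<in> carrier_mat (min n m) m
    \<and> g * frobenius_sq FA \<le> 1 \<and> frobenius_sq FB \<le> 1 \<and> \<kappa> > 0
    \<and> (\<forall>i<n. \<forall>j<m. (\<Sum>k<min n m. FA $$ (k, i) * cnj (FB $$ (k, j))) = complex_of_real \<kappa> * cnj (v $ (i * m + j)))"
proof -
  define V where "V = mat n m (\<lambda>(i, j). v $ (i * m + j))"
  define d where "d = min n m"
  have W: "0 \<le> frobenius_sq V" unfolding frobenius_sq_def by (simp add: sum_nonneg)
  then obtain t where t: "t > 0"
    and small: "\<And>x. 0 \<le> x \<Longrightarrow> x \<le> real d + frobenius_sq V \<Longrightarrow> g * (t * x) \<le> 1 \<and> t * x \<le> 1"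
    using exists_scale_le_1[OF assms, of "real d + frobenius_sq V"] by auto
  define s where "s = complex_of_real (sqrt t)"
  have s: "(cmod s)\<^sup>2 = t" "s * cnj s = complex_of_real t"
    unfolding s_def using t by (simp_all flip: of_real_mult)
  show ?thesis
  proof (cases "n \<le> m")
    case True
    then have dn: "d = n" unfolding d_def by simp
    have "g * frobenius_sq (s \<cdot>\<^sub>m 1\<^sub>m n) \<le> 1" "frobenius_sq (s \<cdot>\<^sub>m V) \<le> 1"
      using small[of "real n"] small[of "frobenius_sq V"] W dn
      by (simp_all add: frobenius_sq_smult frobenius_sq_one s)
    moreover have "(\<Sum>k<d. (s \<cdot>\<^sub>m 1\<^sub>m n) $$ (k, i) * cnj ((s \<cdot>\<^sub>m V) $$ (k, j))) = complex_of_real t * cnj (v $ (i * m + j))"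
      if "i < n" "j < m" for i j
    proof -
      have "(\<Sum>k<d. (s \<cdot>\<^sub>m 1\<^sub>m n) $$ (k, i) * cnj ((s \<cdot>\<^sub>m V) $$ (k, j))) =
          (\<Sum>k<d. if k = i then s * cnj s * cnj (v $ (i * m + j)) else 0)"
        using that dn by (intro sum.cong refl) (auto simp: V_def)
      then show ?thesis using that dn s(2) by simp
    qed
    ultimately show ?thesis using t dn unfolding d_def[symmetric] by (intro exI[of _ "s \<cdot>\<^sub>m 1\<^sub>m n"] exI[of _ "s \<cdot>\<^sub>m V"] exI[of _ t]) (simp add: V_def)
  next
    case False
    then have dm: "d = m" unfolding d_def by simp
    have "g * frobenius_sq (s \<cdot>\<^sub>m adj V) \<le> 1" "frobenius_sq (s \<cdot>\<^sub>m 1\<^sub>m m) \<le> 1"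
      using small[of "frobenius_sq V"] small[of "real m"] W dm
      by (simp_all add: frobenius_sq_smult frobenius_sq_one frobenius_sq_adj s)
    moreover have "(\<Sum>k<d. (s \<cdot>\<^sub>m adj V) $$ (k, i) * cnj ((s \<cdot>\<^sub>m 1\<^sub>m m) $$ (k, j))) = complex_of_real t * cnj (v $ (i * m + j))"
      if "i < n" "j < m" for i j
    proof -
      have "(\<Sum>k<d. (s \<cdot>\<^sub>m adj V) $$ (k, i) * cnj ((s \<cdot>\<^sub>m 1\<^sub>m m) $$ (k, j))) =
          (\<Sum>k<d. if k = j then s * cnj s * cnj (v $ (i * m + j)) else 0)"
        using that dm by (intro sum.cong refl) (auto simp: V_def)
      then show ?thesis using that dm s(2) by simp
    qed
    ultimately show ?thesis using t dm unfolding d_def[symmetric] by (intro exI[of _ "s \<cdot>\<^sub>m adj V"] exI[of _ "s \<cdot>\<^sub>m 1\<^sub>m m"] exI[of _ t]) (simp add: V_def)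
  qed
qed

lemma swap_trace_filter:
  assumes R: "\<rho> \<in> carrier_mat (n * m) (n * m)" and FA: "FA \<in> carrier_mat d n" and FB: "FB \<in> carrier_mat d m"
    and C: "\<forall>i<n. \<forall>j<m. (\<Sum>k<d. FA $$ (k, i) * cnj (FB $$ (k, j))) = complex_of_real \<kappa> * cnj (v $ (i * m + j))"
  shows "swap_trace d (kron FA FB * \<rho> * adj (kron FA FB)) = complex_of_real (\<kappa>\<^sup>2) * qform (ptrans n m \<rho>) v"
proof -
  have K: "kron FA FB \<in> carrier_mat (d * d) (n * m)" using kron_carrier_mat[of FA FB] FA FB by simp
  let ?f = "\<lambda>k l x1 x2 y1 y2. FA $$ (k, x1) * FB $$ (l, x2) * \<rho> $$ (x1 * m + x2, y1 * m + y2) * cnj (FA $$ (l, y1) * FB $$ (k, y2))"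
  have "swap_trace d (kron FA FB * \<rho> * adj (kron FA FB)) =
     (\<Sum>k<d. \<Sum>l<d. \<Sum>x1<n. \<Sum>x2<m. \<Sum>y1<n. \<Sum>y2<m. ?f k l x1 x2 y1 y2)"
    unfolding swap_trace_def
  proof (intro sum.cong refl)
    fix k l assume "k \<in> {..<d}" "l \<in> {..<d}"
    then have kl: "k < d" "l < d" by auto
    have "(kron FA FB * \<rho> * adj (kron FA FB)) $$ (k * d + l, l * d + k) =
        (\<Sum>x<n * m. \<Sum>y<n * m. kron FA FB $$ (k * d + l, x) * \<rho> $$ (x, y) * cnj (kron FA FB $$ (l * d + k, y)))"
      using kl by (intro index_mult_mult_adj[OF K R K] pair_index_less)
    also have "\<dots> = (\<Sum>x1<n. \<Sum>x2<m. \<Sum>y1<n. \<Sum>y2<m.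
        kron FA FB $$ (k * d + l, x1 * m + x2) * \<rho> $$ (x1 * m + x2, y1 * m + y2) * cnj (kron FA FB $$ (l * d + k, y1 * m + y2)))"
      by (simp only: sum_lessThan_pair_index)
    also have "\<dots> = (\<Sum>x1<n. \<Sum>x2<m. \<Sum>y1<n. \<Sum>y2<m. ?f k l x1 x2 y1 y2)"
      by (intro sum.cong refl) (simp add: kron_index[OF FA FB] kl)
    finally show "(kron FA FB * \<rho> * adj (kron FA FB)) $$ (k * d + l, l * d + k) =
        (\<Sum>x1<n. \<Sum>x2<m. \<Sum>y1<n. \<Sum>y2<m. ?f k l x1 x2 y1 y2)" .
  qed
  also have "\<dots> = (\<Sum>x1<n. \<Sum>x2<m. \<Sum>k<d. \<Sum>l<d. \<Sum>y1<n. \<Sum>y2<m. ?f k l x1 x2 y1 y2)"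
    by (rule sum_swap_nested)
  also have "\<dots> = (\<Sum>x1<n. \<Sum>x2<m. \<Sum>y1<n. \<Sum>y2<m. \<Sum>k<d. \<Sum>l<d. ?f k l x1 x2 y1 y2)"
    by (rule sum.cong[OF refl], rule sum.cong[OF refl], rule sum_swap_nested)
  also have "\<dots> = (\<Sum>x1<n. \<Sum>x2<m. \<Sum>y1<n. \<Sum>y2<m. \<rho> $$ (x1 * m + x2, y1 * m + y2)
      * (\<Sum>k<d. FA $$ (k, x1) * cnj (FB $$ (k, y2))) * cnj (\<Sum>l<d. FA $$ (l, y1) * cnj (FB $$ (l, x2))))"
    by (intro sum.cong refl) (simp add: sum_distrib_left sum_distrib_right mult_ac)
  also have "\<dots> = complex_of_real (\<kappa>\<^sup>2) * qform (ptrans n m \<rho>) v"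
    unfolding qform_ptrans using C by (simp add: sum_distrib_left power2_eq_square mult_ac)
  finally show ?thesis .
qed

lemma psd_apply_kraus:
  assumes "psd \<rho>" "\<rho> \<in> carrier_mat M M" "\<forall>(A, B)\<in>set K. kron A B \<in> carrier_mat N M"
  shows "psd (apply_kraus N K \<rho>)"
  unfolding apply_kraus_def
proof (intro psd_msum ballI)
  fix X assume "X \<in> set (map (\<lambda>(A, B). kron A B * \<rho> * adj (kron A B)) K)"
  then obtain A B where "(A, B) \<in> set K" "X = kron A B * \<rho> * adj (kron A B)" by auto
  then have "kron A B \<in> carrier_mat N M" "X = kron A B * \<rho> * adj (kron A B)" using assms(3) by auto
  then show "X \<in> carrier_mat N N \<and> psd X"
    using assms(1,2) psd_mult_mult_adj by (auto intro!: mult_carrier_mat)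
qed

definition twirled_filter ::
  "nat \<Rightarrow> complex mat \<Rightarrow> complex mat \<Rightarrow> ((nat \<Rightarrow> nat) \<times> (nat \<Rightarrow> nat)) list \<Rightarrow> (complex mat \<times> complex mat) list"
  where "twirled_filter d FA FB xs = map (\<lambda>x. (monomial_mat d (fst x) (snd x) * FA, monomial_mat d (fst x) (snd x) * FB)) xs"

lemma apply_kraus_twirled_filter:
  assumes FA: "FA \<in> carrier_mat d n" and FB: "FB \<in> carrier_mat d m" and R: "\<rho> \<in> carrier_mat (n * m) (n * m)"
    and xs: "set xs = twirl_group d" "distinct xs"
  shows "apply_kraus (d * d) (twirled_filter d FA FB xs) \<rho>
    = twirl d (kron FA FB * \<rho> * adj (kron FA FB))"
proof -
  define K where "K = kron FA FB"
  have K: "K \<in> carrier_mat (d * d) (n * m)" unfolding K_def using kron_carrier_mat[of FA FB] FA FB by simp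
  define T where "T = twirl_term d (K * \<rho> * adj K)"
  have kraus_term: "kron (monomial_mat d (fst x) (snd x) * FA) (monomial_mat d (fst x) (snd x) * FB) * \<rho>
      * adj (kron (monomial_mat d (fst x) (snd x) * FA) (monomial_mat d (fst x) (snd x) * FB)) = T x" for x
    using kron_mult[OF monomial_mat_carrier_mat monomial_mat_carrier_mat FA FB]
      mult_mult_adj_assoc[OF monomial_kron_carrier_mat K R]
    unfolding T_def K_def twirl_term_def monomial_kron_def by simp
  have T: "T x \<in> carrier_mat (d * d) (d * d)" for x
    unfolding T_def twirl_term_def using K R by (intro mult_carrier_mat adj_carrier_mat) auto
  have list: "apply_kraus (d * d) (twirled_filter d FA FB xs) \<rho>
      = msum (d * d) (map T xs)"
    unfolding apply_kraus_def twirled_filter_def by (simp add: comp_def kraus_term)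
  show ?thesis
  proof (rule eq_matI)
    fix r t assume "r < dim_row (twirl d (kron FA FB * \<rho> * adj (kron FA FB)))"
      "t < dim_col (twirl d (kron FA FB * \<rho> * adj (kron FA FB)))"
    then have rt: "r < d * d" "t < d * d" by simp_all
    have "apply_kraus (d * d) (twirled_filter d FA FB xs) \<rho> $$ (r, t)
        = (\<Sum>A\<leftarrow>map T xs. A $$ (r, t))"
      unfolding list using T rt by (simp add: msum_index)
    also have "\<dots> = twirl d (K * \<rho> * adj K) $$ (r, t)"
      using xs rt by (simp add: sum_list_distinct_conv_sum_set comp_def twirl_index T_def)
    finally show "apply_kraus (d * d) (twirled_filter d FA FB xs) \<rho> $$ (r, t)
        = twirl d (kron FA FB * \<rho> * adj (kron FA FB)) $$ (r, t)" unfolding K_def .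
  qed (use T msum_carrier_mat[of "map T xs" "d * d"] in \<open>auto simp: list\<close>)
qed


section \<open>Twirled states are multiples of \<open>\<rho>\<^sub>b\<^sub>c\<close>\<close>

lemma bc_formD:
  "bc_form d S \<Longrightarrow> a < d \<Longrightarrow> b < d \<Longrightarrow> a' < d \<Longrightarrow> b' < d \<Longrightarrow> S $$ (a * d + b, a' * d + b') =
     (if a = b then (if a' = a \<and> b' = a then S $$ (0, 0) else 0)
      else if a' = a \<and> b' = b then S $$ (1, 1)
      else if a' = b \<and> b' = a then S $$ (1, d) else 0)"
  unfolding bc_form_def by blast

lemma swap_trace_bc_form:
  assumes "bc_form d S"
  shows "swap_trace d S = of_nat d * S $$ (0, 0) + of_nat d * (of_nat d - 1) * S $$ (1, d)"
proof -
  have "swap_trace d S = (\<Sum>k<d. \<Sum>l<d. if k = l then S $$ (0, 0) else S $$ (1, d))"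
    unfolding swap_trace_def by (intro sum.cong refl) (simp add: bc_formD[OF assms])
  then show ?thesis by (simp add: sum_diag_offdiag)
qed

lemma mtrace_bc_form:
  assumes "bc_form d S" "S \<in> carrier_mat (d * d) (d * d)"
  shows "mtrace S = of_nat d * S $$ (0, 0) + of_nat d * (of_nat d - 1) * S $$ (1, 1)"
proof -
  have "mtrace S = (\<Sum>k<d. \<Sum>l<d. S $$ (k * d + l, k * d + l))"
    unfolding mtrace_def using assms(2) by (simp add: sum_lessThan_pair_index)
  also have "\<dots> = (\<Sum>k<d. \<Sum>l<d. if k = l then S $$ (0, 0) else S $$ (1, 1))"
    by (intro sum.cong refl) (simp add: bc_formD[OF assms(1)])
  finally show ?thesis by (simp add: sum_diag_offdiag)
qed

lemma bc_form_psd_entries: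
  assumes bc: "bc_form d S" and S: "S \<in> carrier_mat (d * d) (d * d)" and "psd S" and d: "1 < d"
  shows "S $$ (0, 0) = complex_of_real (Re (S $$ (0, 0)))" "S $$ (1, 1) = complex_of_real (Re (S $$ (1, 1)))"
    "S $$ (1, d) = complex_of_real (Re (S $$ (1, d)))"
    "0 \<le> Re (S $$ (0, 0))" "0 \<le> Re (S $$ (1, 1)) + Re (S $$ (1, d))"
proof -
  have h: "adj S = S" using \<open>psd S\<close> unfolding psd_def by simp
  have nonneg: "0 \<le> Re (qform S w)" if "w \<in> carrier_vec (d * d)" for w
    using \<open>psd S\<close> S that unfolding psd_iff_qform by auto
  have "2 * d \<le> d * d" using d by simp
  then have idx: "0 < d * d" "1 < d * d" "d < d * d" "1 \<noteq> d" using d by linarith+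
  have swap: "S $$ (d, 1) = S $$ (1, d)" and diag: "S $$ (d, d) = S $$ (1, 1)"
    using bc_formD[OF bc, of 1 0 0 1] bc_formD[OF bc, of 1 0 1 0] d by simp_all
  show "S $$ (0, 0) = complex_of_real (Re (S $$ (0, 0)))" "S $$ (1, 1) = complex_of_real (Re (S $$ (1, 1)))"
    "S $$ (1, d) = complex_of_real (Re (S $$ (1, d)))"
  proof -
    have real: "z = complex_of_real (Re z)" if "cnj z = z" for z
      using that by (simp add: Reals_cnj_iff[symmetric])
    have cnjs: "cnj (S $$ (0, 0)) = S $$ (0, 0)" "cnj (S $$ (1, 1)) = S $$ (1, 1)" "cnj (S $$ (1, d)) = S $$ (1, d)"
      using hermitian_index[OF h, of 0 0] hermitian_index[OF h, of 1 1] hermitian_index[OF h, of 1 d]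
        swap S idx by simp_all
    from real[OF cnjs(1)] real[OF cnjs(2)] real[OF cnjs(3)]
    show "S $$ (0, 0) = complex_of_real (Re (S $$ (0, 0)))" "S $$ (1, 1) = complex_of_real (Re (S $$ (1, 1)))"
      "S $$ (1, d) = complex_of_real (Re (S $$ (1, d)))" .
  qed
  show "0 \<le> Re (S $$ (0, 0))"
    using nonneg[of "unit_vec (d * d) 0"] qform_unit_vec[OF S idx(1)] by simp
  show "0 \<le> Re (S $$ (1, 1)) + Re (S $$ (1, d))"
    using nonneg[of "unit_vec (d * d) 1 + unit_vec (d * d) d"] qform_unit_vec_add[OF S idx(2,3,4)] swap diag
    by simp
qed

lemma smult_bc_form_eq_rho_bc:
  assumes bc: "bc_form d S" and S: "S \<in> carrier_mat (d * d) (d * d)"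
    and entries: "S $$ (0, 0) = complex_of_real \<alpha>" "S $$ (1, 1) = complex_of_real \<beta>" "S $$ (1, d) = complex_of_real \<gamma>"
  shows "complex_of_real r \<cdot>\<^sub>m S = rho_bc d (r * \<alpha>) (r * (\<beta> - \<gamma>)) (r * (\<beta> + \<gamma>))"
proof (rule eq_matI)
  fix x y assume "x < dim_row (rho_bc d (r * \<alpha>) (r * (\<beta> - \<gamma>)) (r * (\<beta> + \<gamma>)))"
    "y < dim_col (rho_bc d (r * \<alpha>) (r * (\<beta> - \<gamma>)) (r * (\<beta> + \<gamma>)))"
  then have "x < d * d" "y < d * d" by (simp_all add: rho_bc_def)
  then obtain i j i' j' where ij: "i < d" "j < d" "i' < d" "j' < d" "x = i * d + j" "y = i' * d + j'"
    using lessThan_mult_pair_index by metis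
  show "(complex_of_real r \<cdot>\<^sub>m S) $$ (x, y) = rho_bc d (r * \<alpha>) (r * (\<beta> - \<gamma>)) (r * (\<beta> + \<gamma>)) $$ (x, y)"
  proof -
    have "(r * (\<beta> - \<gamma>) + r * (\<beta> + \<gamma>)) / 2 = r * \<beta>" "(r * (\<beta> + \<gamma>) - r * (\<beta> - \<gamma>)) / 2 = r * \<gamma>"
      by (simp_all add: algebra_simps)
    moreover have "(complex_of_real r \<cdot>\<^sub>m S) $$ (x, y) = complex_of_real r * S $$ (i * d + j, i' * d + j')"
      using S ij pair_index_less by simp
    ultimately show ?thesis
      unfolding ij(5,6) rho_bc_index[OF ij(1-4)] bc_formD[OF bc ij(1-4)] entries by auto
  qed
qed (use S in \<open>simp_all add: rho_bc_def\<close>)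


lemma bc_form_swap_trace_neg_imp_gt_1:
  assumes bc: "bc_form d S" and S: "S \<in> carrier_mat (d * d) (d * d)" and "psd S"
    and neg: "Re (swap_trace d S) < 0"
  shows "1 < d"
proof -
  have "d \<noteq> 0"
  proof
    assume "d = 0"
    then show False using neg by (simp add: swap_trace_def)
  qed
  moreover have "d \<noteq> 1"
  proof
    assume "d = 1"
    then have "swap_trace d S = S $$ (0, 0)" "0 \<le> Re (qform S (unit_vec 1 0))"
      using swap_trace_bc_form[OF bc] \<open>psd S\<close> S unfolding psd_iff_qform by auto
    then show False using neg qform_unit_vec[of S 1 0] S \<open>d = 1\<close> by simp
  qed
  ultimately show ?thesis by simp
qed

lemma bc_form_normalize:
  assumes bc: "bc_form d S" and S: "S \<in> carrier_mat (d * d) (d * d)" and "psd S"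
    and neg: "Re (swap_trace d S) < 0"
  shows "\<exists>a b c. real d * a + (b + c) * (real d * (real d - 1) / 2) = 1 \<and> mtrace S \<noteq> 0
    \<and> (1 / mtrace S) \<cdot>\<^sub>m S = rho_bc d a b c
    \<and> density_mat (d * d) (rho_bc d a b c) \<and> \<not> psd (ptrans d d (rho_bc d a b c))"
proof -
  have d: "1 < d" using bc_form_swap_trace_neg_imp_gt_1[OF assms] .
  have pos: "real d * (real d - 1) > 0" using d by simp
  define \<alpha> where "\<alpha> = Re (S $$ (0, 0))"
  define \<beta> where "\<beta> = Re (S $$ (1, 1))"
  define \<gamma> where "\<gamma> = Re (S $$ (1, d))"
  note entries = bc_form_psd_entries[OF bc S \<open>psd S\<close> d, folded \<alpha>_def \<beta>_def \<gamma>_def]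
  have "swap_trace d S = complex_of_real (real d * \<alpha> + real d * (real d - 1) * \<gamma>)"
    unfolding swap_trace_bc_form[OF bc] entries(1) entries(3) by simp
  then have "real d * \<alpha> + real d * (real d - 1) * \<gamma> < 0" using neg by simp
  moreover have "0 \<le> real d * \<alpha>" using entries(4) by simp
  ultimately have "real d * (real d - 1) * \<gamma> < 0" by linarith
  then have "\<gamma> < 0" using pos by (auto simp: mult_less_0_iff)
  then have "real d * (real d - 1) * \<beta> > 0" using pos entries(5) by simp
  define t where "t = real d * \<alpha> + real d * (real d - 1) * \<beta>"
  have t: "t > 0"
    unfolding t_def by (rule add_nonneg_pos) (use entries(4) \<open>real d * (real d - 1) * \<beta> > 0\<close> in simp_all)
  have tr: "mtrace S = complex_of_real t"
    unfolding mtrace_bc_form[OF bc S] t_def entries(1) entries(2) by simp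
  define \<sigma> where "\<sigma> = complex_of_real (1 / t) \<cdot>\<^sub>m S"
  have \<sigma>: "\<sigma> = rho_bc d (\<alpha> / t) ((\<beta> - \<gamma>) / t) ((\<beta> + \<gamma>) / t)"
    unfolding \<sigma>_def using smult_bc_form_eq_rho_bc[OF bc S entries(1-3), of "1 / t"] by simp
  have "density_mat (d * d) \<sigma>"
    unfolding density_mat_def \<sigma>_def
    using S psd_smult_of_real[OF \<open>psd S\<close>, of "1 / t"] t mtrace_smult[OF S] tr by simp
  moreover have "\<not> psd (ptrans d d \<sigma>)"
  proof (rule not_psd_ptrans_if_swap_trace_neg)
    have "swap_trace d \<sigma> = complex_of_real (1 / t) * swap_trace d S"
      unfolding \<sigma>_def swap_trace_def using S pair_index_less by (simp add: sum_distrib_left)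
    then show "Re (swap_trace d \<sigma>) < 0" using neg t by (simp add: divide_neg_pos)
  qed
  moreover have "real d * (\<alpha> / t) + ((\<beta> - \<gamma>) / t + (\<beta> + \<gamma>) / t) * (real d * (real d - 1) / 2)
      = (real d * \<alpha> + real d * (real d - 1) * \<beta>) / t"
    using t by (simp add: field_simps)
  then have "real d * (\<alpha> / t) + ((\<beta> - \<gamma>) / t + (\<beta> + \<gamma>) / t) * (real d * (real d - 1) / 2) = 1"
    using t unfolding t_def[symmetric] by simp
  ultimately show ?thesis
    using t tr \<sigma> unfolding \<sigma>_def by (intro exI[of _ "\<alpha> / t"] exI[of _ "(\<beta> - \<gamma>) / t"] exI[of _ "(\<beta> + \<gamma>) / t"]) simp
qed


lemma locc_twirled_filter:
  assumes FA: "FA \<in> carrier_mat d n" and FB: "FB \<in> carrier_mat d m"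
    and bA: "real (card (twirl_group d)) * frobenius_sq FA \<le> 1" and bB: "frobenius_sq FB \<le> 1"
    and xs: "set xs = twirl_group d" "distinct xs"
  shows "locc n m d d (twirled_filter d FA FB xs)"
proof -
  let ?M = "\<lambda>x. monomial_mat d (fst x) (snd x)"
  have perm: "fst x permutes {..<d}" if "x \<in> set xs" for x
    using that xs(1) twirl_group_iff[of "fst x" "snd x" d] by auto
  have MA: "monomial_mat d p ph * FA \<in> carrier_mat d n" and MB: "monomial_mat d p ph * FB \<in> carrier_mat d m"
    for p ph using FA FB by (auto intro: mult_carrier_mat)
  have alice: "locc n m d m (map (\<lambda>A. (A, 1\<^sub>m m)) (map (\<lambda>x. ?M x * FA) xs))"
  proof (rule locc.alice)
    show "\<forall>A\<in>set (map (\<lambda>x. ?M x * FA) xs). A \<in> carrier_mat d n" using MA by auto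
    have "(\<Sum>F\<leftarrow>map (\<lambda>x. ?M x * FA) xs. frobenius_sq F) = (\<Sum>x\<leftarrow>xs. frobenius_sq FA)"
      using frobenius_sq_monomial_mat_mult[OF perm FA] by (simp add: comp_def cong: map_cong)
    also have "\<dots> = real (card (twirl_group d)) * frobenius_sq FA"
      using xs distinct_card[OF xs(2)] by (simp add: sum_list_triv)
    finally show "psd (1\<^sub>m n - msum n (map (\<lambda>A. adj A * A) (map (\<lambda>x. ?M x * FA) xs)))"
      using psd_one_minus_msum_adj_mult[of "map (\<lambda>x. ?M x * FA) xs" d n] MA bA by auto
  qed
  have bob: "\<forall>L\<in>set (map (\<lambda>x. map (\<lambda>B. (1\<^sub>m d :: complex mat, B)) [?M x * FB]) xs). locc d m d d L"
  proof
    fix L assume "L \<in> set (map (\<lambda>x. map (\<lambda>B. (1\<^sub>m d :: complex mat, B)) [?M x * FB]) xs)"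
    then obtain x where x: "x \<in> set xs" "L = map (\<lambda>B. (1\<^sub>m d :: complex mat, B)) [?M x * FB]" by auto
    show "locc d m d d L" unfolding x(2)
    proof (rule locc.bob)
      show "\<forall>B\<in>set [?M x * FB]. B \<in> carrier_mat d m" using MB by simp
      show "psd (1\<^sub>m m - msum m (map (\<lambda>B. adj B * B) [?M x * FB]))"
        using psd_one_minus_msum_adj_mult[of "[?M x * FB]" d m] MB bB
          frobenius_sq_monomial_mat_mult[OF perm[OF x(1)] FB] by simp
    qed
  qed
  have "locc n m d d (concat (map2 (\<lambda>(A, B) L. map (\<lambda>(A', B'). (A' * A, B' * B)) L)
      (map (\<lambda>A. (A, 1\<^sub>m m)) (map (\<lambda>x. ?M x * FA) xs)) (map (\<lambda>x. map (\<lambda>B. (1\<^sub>m d :: complex mat, B)) [?M x * FB]) xs)))"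
    by (rule locc.comp[OF alice _ bob]) simp
  also have "concat (map2 (\<lambda>(A, B) L. map (\<lambda>(A', B'). (A' * A, B' * B)) L)
      (map (\<lambda>A. (A, 1\<^sub>m m)) (map (\<lambda>x. ?M x * FA) xs)) (map (\<lambda>x. map (\<lambda>B. (1\<^sub>m d :: complex mat, B)) [?M x * FB]) xs))
    = twirled_filter d FA FB xs"
    unfolding twirled_filter_def
    by (induction xs) (simp_all add: left_mult_one_mat[OF MA] right_mult_one_mat[OF MB])
  finally show ?thesis .
qed

lemma twirled_filter_output:
  assumes R: "\<rho> \<in> carrier_mat (n * m) (n * m)" "psd \<rho>"
    and FA: "FA \<in> carrier_mat d n" and FB: "FB \<in> carrier_mat d m" and "\<kappa> > 0"
    and C: "\<forall>i<n. \<forall>j<m. (\<Sum>k<d. FA $$ (k, i) * cnj (FB $$ (k, j))) = complex_of_real \<kappa> * cnj (v $ (i * m + j))"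
    and neg: "Re (qform (ptrans n m \<rho>) v) < 0"
    and xs: "set xs = twirl_group d" "distinct xs"
  defines "S \<equiv> apply_kraus (d * d) (twirled_filter d FA FB xs) \<rho>"
  shows "S \<in> carrier_mat (d * d) (d * d)" "psd S" "bc_form d S" "Re (swap_trace d S) < 0"
proof -
  define \<tau> where "\<tau> = kron FA FB * \<rho> * adj (kron FA FB)"
  have \<tau>: "\<tau> \<in> carrier_mat (d * d) (d * d)"
    unfolding \<tau>_def using FA FB R kron_carrier_mat[of FA FB] by (auto intro!: mult_carrier_mat)
  have S: "S = twirl d \<tau>"
    unfolding S_def \<tau>_def by (rule apply_kraus_twirled_filter[OF FA FB R(1) xs])
  show "S \<in> carrier_mat (d * d) (d * d)" "bc_form d S" unfolding S using bc_form_twirl[OF \<tau>] by simp_all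
  have "\<forall>(A, B)\<in>set (twirled_filter d FA FB xs). kron A B \<in> carrier_mat (d * d) (n * m)"
    unfolding twirled_filter_def using FA FB by (auto intro!: carrier_matI)
  then show "psd S" unfolding S_def using psd_apply_kraus[OF R(2,1)] by blast
  have "Re (swap_trace d S) = real (card (twirl_group d)) * (\<kappa>\<^sup>2 * Re (qform (ptrans n m \<rho>) v))"
    unfolding S by (simp add: swap_trace_twirl[OF \<tau>] swap_trace_filter[OF R(1) FA FB C, folded \<tau>_def])
  then show "Re (swap_trace d S) < 0"
    using neg \<open>\<kappa> > 0\<close> card_twirl_group_pos[of d] by (simp add: mult_pos_neg)
qed

theorem theorem1:
  fixes n m :: nat and \<rho> :: "complex mat"
  assumes "density_mat (n*m) \<rho>"
    and "\<not> psd (ptrans n m \<rho>)"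
  shows "\<exists>d a b c. d \<le> min n m
     \<and> real d * a + (b + c) * (real d * (real d - 1) / 2) = 1
     \<and> density_mat (d*d) (rho_bc d a b c)
     \<and> \<not> psd (ptrans d d (rho_bc d a b c))
     \<and> locc_convertible n m d d \<rho> (rho_bc d a b c)"
proof -
  have R: "\<rho> \<in> carrier_mat (n * m) (n * m)" "psd \<rho>"
    using assms(1) unfolding density_mat_def by auto
  then have "adj (ptrans n m \<rho>) = ptrans n m \<rho>" using adj_ptrans unfolding psd_def by blast
  then obtain v where neg: "Re (qform (ptrans n m \<rho>) v) < 0"
    using assms(2) unfolding psd_iff_qform by (auto simp: not_le)
  define d where "d = min n m"
  obtain FA FB \<kappa> where FA: "FA \<in> carrier_mat d n" and FB: "FB \<in> carrier_mat d m"
    and bA: "real (card (twirl_group d)) * frobenius_sq FA \<le> 1" and bB: "frobenius_sq FB \<le> 1" and "\<kappa> > 0"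
    and C: "\<forall>i<n. \<forall>j<m. (\<Sum>k<d. FA $$ (k, i) * cnj (FB $$ (k, j))) = complex_of_real \<kappa> * cnj (v $ (i * m + j))"
    using exists_filters[of "real (card (twirl_group d))" n m v] unfolding d_def by auto
  obtain xs where xs: "set xs = twirl_group d" "distinct xs"
    using finite_distinct_list[OF finite_twirl_group] by blast
  define S where "S = apply_kraus (d * d) (twirled_filter d FA FB xs) \<rho>"
  note S = twirled_filter_output[OF R FA FB \<open>\<kappa> > 0\<close> C neg xs, folded S_def]
  obtain a b c where abc: "real d * a + (b + c) * (real d * (real d - 1) / 2) = 1"
    "mtrace S \<noteq> 0" "(1 / mtrace S) \<cdot>\<^sub>m S = rho_bc d a b c"
    "density_mat (d * d) (rho_bc d a b c)" "\<not> psd (ptrans d d (rho_bc d a b c))"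
    using bc_form_normalize[OF S(3,1,2,4)] by blast
  have "locc_convertible n m d d \<rho> (rho_bc d a b c)"
    unfolding locc_convertible_def Let_def using locc_twirled_filter[OF FA FB bA bB xs] abc(2,3)
    by (intro exI[of _ "twirled_filter d FA FB xs"]) (simp add: S_def)
  moreover have "d \<le> min n m" unfolding d_def by simp
  ultimately show ?thesis using abc(1,4,5) by blast
qed

end
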